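(* Let $M$ be a matroid on a finite set $S$, and let $T_0\subset T_1\subset\cdots\subset T_k$ be its primary flag. Then the sequence of primary factors $M(T_0,T_1),\dots,M(T_{k-1},T_k)$ is the unique sequence $M_1,\dots,M_k$ of nonempty matroids such that $M=M_1\mathbin{\Box}\cdots\mathbin{\Box} M_k$, each $M_i$ is either irreducible or uniform, and no free product of two or more consecutive $M_i$'s is uniform.
   Context: For a matroid $M$ on $S$ write $\rho_M$ for its rank function, $\rho(M)=\rho_M(S)$, $\nu_M(A)=|A|-\rho_M(A)$, $\lambda_M(A)=\rho(M)-\rho_M(A)$. For matroids $M$ on $S$ and $N$ on $T$ with $S\cap T=\emptyset$, the free product $M\mathbin{\Box} N$ is the matroid on $S\cup T$ whose independent sets are those $A$ with $A\cap S$ independent in $M$ and $\lambda_M(A\cap S)\geq\nu_N(A\cap T)$; it is associative, and "$M=M_1\mathbin{\Box}\cdots\mathbin{\Box} M_k$" means equality of matroids on $S$, with the ground sets of the $M_i$ partitioning $S$. A nonempty matroid $M$ is irreducible if every factorization of $M$ as a free product contains $M$ itself as a factor. For $A\subseteq B\subseteq S$, $M(A,B)$ denotes the minor $(M|B)/A$ on $B\setminus A$. A cyclic flat is a flat that is a union of circuits; $\mathcal D(M)$ is the complete sublattice of $2^S$ generated by all cyclic flats of $M$ (it contains $\emptyset$ and $S$). A pinchpoint of a poset is an element comparable to all elements. The primary flag of $M$ is the chain $T_0\subset\cdots\subset T_k$ of all pinchpoints of $\mathcal D(M)$, and the minors $M(T_{i-1},T_i)$ are the primary factors of $M$. *)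

theory Defs
  imports Main
begin

text \<open>A matroid is represented as a pair (ground set, family of independent sets).\<close>
type_synonym 'a matroid = "'a set \<times> 'a set set"

definition matroid :: "'a matroid \<Rightarrow> bool" where
  "matroid M \<longleftrightarrow> finite (fst M) \<and> snd M \<subseteq> Pow (fst M) \<and> {} \<in> snd M
     \<and> (\<forall>X Y. X \<in> snd M \<and> Y \<subseteq> X \<longrightarrow> Y \<in> snd M)
     \<and> (\<forall>X Y. X \<in> snd M \<and> Y \<in> snd M \<and> card X < card Y
           \<longrightarrow> (\<exists>y \<in> Y - X. insert y X \<in> snd M))"

definition rk :: "'a matroid \<Rightarrow> 'a set \<Rightarrow> nat" where
  "rk M A = Max (card ` {X \<in> snd M. X \<subseteq> A})"

definition lam :: "'a matroid \<Rightarrow> 'a set \<Rightarrow> nat" where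
  "lam M A = rk M (fst M) - rk M A"

definition nu :: "'a matroid \<Rightarrow> 'a set \<Rightarrow> nat" where
  "nu M A = card A - rk M A"

text \<open>Free product of M (on S) and N (on T), S and T disjoint.\<close>
definition free_prod :: "'a matroid \<Rightarrow> 'a matroid \<Rightarrow> 'a matroid" where
  "free_prod M N = (fst M \<union> fst N,
     {A. A \<subseteq> fst M \<union> fst N \<and> A \<inter> fst M \<in> snd M
         \<and> lam M (A \<inter> fst M) \<ge> nu N (A \<inter> fst N)})"

text \<open>Iterated free product M1 \<box> ... \<box> Mk (free product is associative).\<close>
fun free_prod_list :: "'a matroid list \<Rightarrow> 'a matroid" where
  "free_prod_list [] = ({}, {{}})"
| "free_prod_list [N] = N"
| "free_prod_list (N # Ns) = free_prod N (free_prod_list Ns)"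

definition partitions_ground :: "'a matroid list \<Rightarrow> 'a set \<Rightarrow> bool" where
  "partitions_ground Ms S \<longleftrightarrow>
     (\<forall>i < length Ms. fst (Ms ! i) \<noteq> {})
     \<and> (\<forall>i < length Ms. \<forall>j < length Ms. i \<noteq> j \<longrightarrow> fst (Ms ! i) \<inter> fst (Ms ! j) = {})
     \<and> (\<Union>i < length Ms. fst (Ms ! i)) = S"

definition factorization :: "'a matroid list \<Rightarrow> 'a matroid \<Rightarrow> bool" where
  "factorization Ms M \<longleftrightarrow> (\<forall>N \<in> set Ms. matroid N)
     \<and> partitions_ground Ms (fst M) \<and> M = free_prod_list Ms"

definition irreducible :: "'a matroid \<Rightarrow> bool" where
  "irreducible M \<longleftrightarrow> fst M \<noteq> {} \<and> (\<forall>Ms. factorization Ms M \<longrightarrow> M \<in> set Ms)"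

definition uniform :: "'a matroid \<Rightarrow> bool" where
  "uniform M \<longleftrightarrow> (\<exists>r. snd M = {X. X \<subseteq> fst M \<and> card X \<le> r})"

text \<open>The minor M(A,B) = (M|B)/A on B - A.\<close>
definition minor :: "'a matroid \<Rightarrow> 'a set \<Rightarrow> 'a set \<Rightarrow> 'a matroid" where
  "minor M A B = (B - A, {X. X \<subseteq> B - A \<and> rk M (X \<union> A) = card X + rk M A})"

definition circuit :: "'a matroid \<Rightarrow> 'a set \<Rightarrow> bool" where
  "circuit M C \<longleftrightarrow> C \<subseteq> fst M \<and> C \<notin> snd M \<and> (\<forall>D. D \<subset> C \<longrightarrow> D \<in> snd M)"

definition flat :: "'a matroid \<Rightarrow> 'a set \<Rightarrow> bool" where
  "flat M F \<longleftrightarrow> F \<subseteq> fst M \<and> (\<forall>x \<in> fst M - F. rk M (insert x F) > rk M F)"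

definition cyclic_flat :: "'a matroid \<Rightarrow> 'a set \<Rightarrow> bool" where
  "cyclic_flat M F \<longleftrightarrow> flat M F \<and> F = \<Union>{C. circuit M C \<and> C \<subseteq> F}"

text \<open>Complete sublattice of 2^S: closed under arbitrary unions and intersections
  (the empty union is {} and the empty intersection is S).\<close>
definition complete_sublattice :: "'a set \<Rightarrow> 'a set set \<Rightarrow> bool" where
  "complete_sublattice S L \<longleftrightarrow> L \<subseteq> Pow S
     \<and> (\<forall>F. F \<subseteq> L \<longrightarrow> \<Union>F \<in> L) \<and> (\<forall>F. F \<subseteq> L \<longrightarrow> S \<inter> \<Inter>F \<in> L)"

definition Dlat :: "'a matroid \<Rightarrow> 'a set set" where
  "Dlat M = \<Inter>{L. complete_sublattice (fst M) L \<and> {F. cyclic_flat M F} \<subseteq> L}"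

definition pinchpoint :: "'a matroid \<Rightarrow> 'a set \<Rightarrow> bool" where
  "pinchpoint M T \<longleftrightarrow> T \<in> Dlat M \<and> (\<forall>U \<in> Dlat M. T \<subseteq> U \<or> U \<subseteq> T)"

definition primary_flag :: "'a matroid \<Rightarrow> 'a set list \<Rightarrow> bool" where
  "primary_flag M Ts \<longleftrightarrow> sorted_wrt (\<subset>) Ts \<and> set Ts = {T. pinchpoint M T}"

definition primary_factors :: "'a matroid \<Rightarrow> 'a set list \<Rightarrow> 'a matroid list" where
  "primary_factors M Ts = map (\<lambda>i. minor M (Ts ! (i - 1)) (Ts ! i)) [1..<length Ts]"

end

theory Submission
  imports Defs
begin

text \<open>A set \<open>X \<subseteq> S\<close> comparable with every cyclic flat is exactly one with
  \<open>M = M(\<emptyset>,X) \<box> M(X,S)\<close>, and such sets pass to and lift from the minors \<open>M(Y,Z)\<close>. Hence the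
  factorizations of \<open>M\<close> are the factor sequences \<open>M(T\<^sub>i\<^sub>-\<^sub>1,T\<^sub>i)\<close> of the flags
  \<open>\<emptyset> = T\<^sub>0 \<subset> \<dots> \<subset> T\<^sub>k = S\<close> of comparable sets. For comparable \<open>Y \<subset> Z\<close> the minor
  \<open>M(Y,Z)\<close> is irreducible iff no comparable set lies strictly between \<open>Y\<close> and \<open>Z\<close>, and
  uniform iff every member of \<open>\<D>(M)\<close> lies below \<open>Y\<close> or above \<open>Z\<close>. With these two criteria,
  the conditions on the factors say precisely that the flag lists all pinchpoints of \<open>\<D>(M)\<close>:
  a pinchpoint strictly inside a step makes that factor neither irreducible nor uniform, and a
  flag member outside \<open>\<D>(M)\<close> is enclosed by the nearest pinchpoints below and above it, which
  span a uniform product of at least two consecutive factors.\<close>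

section \<open>Rank\<close>

locale is_matroid =
  fixes M :: "'a matroid"
  assumes matroid: "matroid M"
begin

abbreviation "S \<equiv> fst M"
abbreviation "Ind \<equiv> snd M"
abbreviation "r \<equiv> rk M"

lemma finite_ground: "finite S"
  using matroid unfolding matroid_def by auto

lemma finite_subset_ground: "X \<subseteq> S \<Longrightarrow> finite X"
  using finite_ground finite_subset by auto

lemma indep_subset_ground: "X \<in> Ind \<Longrightarrow> X \<subseteq> S"
  using matroid unfolding matroid_def by auto

lemma finite_indep: "X \<in> Ind \<Longrightarrow> finite X"
  using indep_subset_ground finite_subset_ground by blast

lemma empty_indep: "{} \<in> Ind"
  using matroid unfolding matroid_def by auto

lemma indep_subset: "X \<in> Ind \<Longrightarrow> Y \<subseteq> X \<Longrightarrow> Y \<in> Ind"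
  using matroid unfolding matroid_def by blast

lemma indep_augment: "X \<in> Ind \<Longrightarrow> Y \<in> Ind \<Longrightarrow> card X < card Y \<Longrightarrow> \<exists>y\<in>Y - X. insert y X \<in> Ind"
  using matroid unfolding matroid_def by blast

lemma finite_indep_subsets: "finite {X \<in> Ind. X \<subseteq> A}"
proof -
  have "{X \<in> Ind. X \<subseteq> A} \<subseteq> Pow S" using indep_subset_ground by auto
  thus ?thesis using finite_ground finite_subset by blast
qed

lemma indep_card_le_rk: "X \<in> Ind \<Longrightarrow> X \<subseteq> A \<Longrightarrow> card X \<le> r A"
  unfolding rk_def using finite_indep_subsets by (intro Max_ge) auto

lemma obtain_basis:
  obtains B where "B \<in> Ind" "B \<subseteq> A" "card B = r A"
proof -
  have "r A \<in> card ` {X \<in> Ind. X \<subseteq> A}"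
    unfolding rk_def using finite_indep_subsets empty_indep by (intro Max_in) auto
  thus ?thesis using that by auto
qed

lemma rk_leI: "(\<And>X. X \<in> Ind \<Longrightarrow> X \<subseteq> A \<Longrightarrow> card X \<le> k) \<Longrightarrow> r A \<le> k"
  using obtain_basis[of A] by metis

lemma rk_le_card: "finite A \<Longrightarrow> r A \<le> card A"
  by (rule rk_leI) (simp add: card_mono)

lemma rk_indep: "X \<in> Ind \<Longrightarrow> r X = card X"
  by (simp add: finite_indep indep_card_le_rk le_antisym rk_le_card)

lemma indep_if_rk_eq_card: "finite X \<Longrightarrow> r X = card X \<Longrightarrow> X \<in> Ind"
proof -
  assume "finite X" "r X = card X"
  obtain B where "B \<in> Ind" "B \<subseteq> X" "card B = r X" by (rule obtain_basis)
  with \<open>finite X\<close> \<open>r X = card X\<close> show ?thesis using card_subset_eq by metis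
qed

lemma rk_mono: "A \<subseteq> B \<Longrightarrow> r A \<le> r B"
  using obtain_basis[of A] indep_card_le_rk[of _ B] by (metis order.trans)

lemma rk_empty: "r {} = 0"
  using rk_le_card[of "{}"] by simp

lemma extend_to_basis:
  assumes "X \<in> Ind" "X \<subseteq> A"
  obtains B where "B \<in> Ind" "X \<subseteq> B" "B \<subseteq> A" "card B = r A"
proof -
  let ?F = "{B \<in> Ind. X \<subseteq> B \<and> B \<subseteq> A}"
  have "finite ?F"
    using finite_indep_subsets[of A] by (rule finite_subset[rotated]) auto
  moreover have "X \<in> ?F" using assms by auto
  ultimately have "Max (card ` ?F) \<in> card ` ?F" by (intro Max_in) auto
  then obtain B where B: "B \<in> ?F" "card B = Max (card ` ?F)" by auto
  have B_max: "card B' \<le> card B" if "B' \<in> ?F" for B'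
    using B(2) \<open>finite ?F\<close> that by simp
  have "\<not> card B < r A"
  proof
    assume "card B < r A"
    moreover obtain K where "K \<in> Ind" "K \<subseteq> A" "card K = r A" by (rule obtain_basis)
    ultimately obtain y where "y \<in> K - B" "insert y B \<in> Ind"
      using indep_augment[of B K] B by auto
    hence "insert y B \<in> ?F" using \<open>K \<subseteq> A\<close> B by auto
    hence "card (insert y B) \<le> card B" by (rule B_max)
    thus False using \<open>y \<in> K - B\<close> B finite_indep by auto
  qed
  moreover have "card B \<le> r A" using B(1) indep_card_le_rk by blast
  ultimately show ?thesis using that B by auto
qed

lemma rk_submodular: "r (A \<union> B) + r (A \<inter> B) \<le> r A + r B"
proof -
  obtain J where J: "J \<in> Ind" "J \<subseteq> A \<inter> B" "card J = r (A \<inter> B)" by (rule obtain_basis)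
  obtain K where K: "K \<in> Ind" "J \<subseteq> K" "K \<subseteq> A \<union> B" "card K = r (A \<union> B)"
    using extend_to_basis[of J "A \<union> B"] J by blast
  have "finite K" using K finite_indep by auto
  have "card (K \<inter> A) \<le> r A" "card (K \<inter> B) \<le> r B"
    using K indep_subset by (auto intro!: indep_card_le_rk)
  moreover have "card (K \<inter> A) + card (K \<inter> B) = card K + card (K \<inter> A \<inter> B)"
  proof -
    have "(K \<inter> A) \<union> (K \<inter> B) = K" "(K \<inter> A) \<inter> (K \<inter> B) = K \<inter> A \<inter> B" using K by auto
    thus ?thesis using card_Un_Int[of "K \<inter> A" "K \<inter> B"] \<open>finite K\<close> by simp
  qed
  moreover have "card J \<le> card (K \<inter> A \<inter> B)"
    using J K \<open>finite K\<close> by (intro card_mono) auto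
  ultimately show ?thesis using J K by linarith
qed

lemma rk_Un_le: "finite B \<Longrightarrow> r (A \<union> B) \<le> r A + card B"
proof -
  assume "finite B"
  obtain K where K: "K \<in> Ind" "K \<subseteq> A \<union> B" "card K = r (A \<union> B)" by (rule obtain_basis)
  have "K - B \<in> Ind" using indep_subset[OF K(1)] by blast
  hence "card (K - B) \<le> r A" using K(2) indep_card_le_rk by blast
  moreover have "card K \<le> card ((K - B) \<union> B)"
    using finite_indep[OF K(1)] \<open>finite B\<close> by (intro card_mono) auto
  moreover have "card ((K - B) \<union> B) \<le> card (K - B) + card B" by (rule card_Un_le)
  ultimately show ?thesis using K(3) by linarith
qed

lemma rk_insert_le: "r (insert x A) \<le> Suc (r A)"
  using rk_Un_le[of "{x}" A] by simp

lemma rk_increase_single: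
  assumes "r Z < r (Z \<union> Y)"
  shows "\<exists>y\<in>Y. r Z < r (insert y Z)"
proof -
  obtain J where J: "J \<in> Ind" "J \<subseteq> Z" "card J = r Z" by (rule obtain_basis)
  obtain K where K: "K \<in> Ind" "J \<subseteq> K" "K \<subseteq> Z \<union> Y" "card K = r (Z \<union> Y)"
    using extend_to_basis[of J "Z \<union> Y"] J by blast
  have "finite J" using J finite_indep by auto
  have "\<not> K \<subseteq> J" using assms J K \<open>finite J\<close> by (metis card_mono leD)
  then obtain y where y: "y \<in> K" "y \<notin> J" by auto
  have "insert y J \<in> Ind" using indep_subset K y by auto
  moreover have "card (insert y J) = Suc (r Z)" using \<open>finite J\<close> y J by simp
  moreover have "insert y J \<subseteq> insert y Z" using J(2) by auto
  ultimately have "Suc (r Z) \<le> r (insert y Z)" using indep_card_le_rk by metis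
  moreover have "y \<notin> Z"
    using \<open>insert y J \<in> Ind\<close> \<open>card (insert y J) = Suc (r Z)\<close> J(2) indep_card_le_rk[of "insert y J" Z]
    by auto
  ultimately show ?thesis using K(3) y(1) by (intro bexI[of _ y]) auto
qed

lemma rk_Un_eq_if_insert_eq:
  assumes "\<And>y. y \<in> Y \<Longrightarrow> r (insert y Z) = r Z"
  shows "r (Z \<union> Y) = r Z"
  using rk_increase_single[of Z Y] rk_mono[of Z "Z \<union> Y"] assms by fastforce

lemma rk_insert_eq_mono:
  assumes "C \<subseteq> A" "r (insert y C) = r C"
  shows "r (insert y A) = r A"
proof -
  have "r (insert y A) + r (A \<inter> insert y C) \<le> r A + r (insert y C)"
    using rk_submodular[of A "insert y C"] assms(1) by (simp add: insert_absorb2 Un_insert_right sup.absorb1)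
  moreover have "r C \<le> r (A \<inter> insert y C)" "r A \<le> r (insert y A)"
    using assms(1) by (auto intro: rk_mono)
  ultimately show ?thesis using assms(2) by linarith
qed

lemma rk_Un_Diff_single:
  assumes "e \<in> F" "r (F - {e}) = r F"
  shows "r ((F - {e}) \<union> X) = r (F \<union> X)"
proof -
  have "r (insert e ((F - {e}) \<union> X)) = r ((F - {e}) \<union> X)"
  proof (rule rk_insert_eq_mono)
    show "F - {e} \<subseteq> (F - {e}) \<union> X" by blast
    show "r (insert e (F - {e})) = r (F - {e})" using assms by (simp add: insert_absorb)
  qed
  moreover have "insert e ((F - {e}) \<union> X) = F \<union> X" using assms(1) by auto
  ultimately show ?thesis by simp
qed

lemma rk_Un_basis:
  assumes "B \<subseteq> F" "B \<in> Ind" "card B = r F"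
  shows "r (B \<union> Z) = r (F \<union> Z)"
proof -
  have spans: "r (insert y B) = r B" if "y \<in> F" for y
  proof -
    have "r (insert y B) \<le> r F" using that assms(1) by (intro rk_mono) auto
    moreover have "r B \<le> r (insert y B)" by (intro rk_mono) auto
    ultimately show ?thesis using rk_indep[OF assms(2)] assms(3) by simp
  qed
  have "r (insert y (B \<union> Z)) = r (B \<union> Z)" if "y \<in> F" for y
    using rk_insert_eq_mono[of B "B \<union> Z" y] spans[OF that] by blast
  hence "r ((B \<union> Z) \<union> F) = r (B \<union> Z)" by (rule rk_Un_eq_if_insert_eq)
  moreover have "(B \<union> Z) \<union> F = F \<union> Z" using assms(1) by auto
  ultimately show ?thesis by simp
qed

end

section \<open>Cyclic flats\<close>

context is_matroid
begin

definition cl :: "'a set \<Rightarrow> 'a set" where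
  "cl A = {x \<in> S. r (insert x A) = r A}"

lemma subset_cl: "A \<subseteq> S \<Longrightarrow> A \<subseteq> cl A"
  unfolding cl_def by (auto simp: insert_absorb)

lemma rk_cl: "A \<subseteq> S \<Longrightarrow> r (cl A) = r A"
proof -
  assume A: "A \<subseteq> S"
  have "r (A \<union> cl A) = r A" by (rule rk_Un_eq_if_insert_eq) (simp add: cl_def)
  moreover have "A \<union> cl A = cl A" using subset_cl[OF A] by auto
  ultimately show ?thesis by simp
qed

lemma flat_cl: "A \<subseteq> S \<Longrightarrow> flat M (cl A)"
  unfolding flat_def
proof (intro conjI ballI)
  assume A: "A \<subseteq> S"
  show "cl A \<subseteq> S" unfolding cl_def by auto
  fix x assume x: "x \<in> S - cl A"
  hence "r (insert x A) \<noteq> r A" unfolding cl_def by auto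
  moreover have "r A \<le> r (insert x A)" by (intro rk_mono) auto
  moreover have "r (insert x A) \<le> r (insert x (cl A))" using subset_cl[OF A] by (intro rk_mono) auto
  ultimately show "r (cl A) < r (insert x (cl A))" using rk_cl[OF A] by simp
qed

lemma rk_Un_cl: "C \<subseteq> A \<Longrightarrow> r (A \<union> cl C) = r A"
  by (rule rk_Un_eq_if_insert_eq) (auto simp: cl_def intro: rk_insert_eq_mono)

lemma dependent_contains_circuit:
  assumes "X \<subseteq> S" "X \<notin> Ind"
  obtains C where "C \<subseteq> X" "circuit M C"
proof -
  let ?D = "{Y. Y \<subseteq> X \<and> Y \<notin> Ind}"
  have "finite X" using assms(1) by (rule finite_subset_ground)
  moreover have "?D \<subseteq> Pow X" by auto
  ultimately have "finite ?D" using finite_subset by blast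
  moreover have "X \<in> ?D" using assms by auto
  ultimately have "Min (card ` ?D) \<in> card ` ?D" by (intro Min_in) auto
  then obtain C where C: "C \<in> ?D" "card C = Min (card ` ?D)" by auto
  have C_min: "card C \<le> card Y" if "Y \<in> ?D" for Y
    using C(2) \<open>finite ?D\<close> that by simp
  have "circuit M C" unfolding circuit_def
  proof (intro conjI allI impI)
    show "C \<subseteq> S" "C \<notin> Ind" using C assms(1) by auto
    fix D assume "D \<subset> C"
    moreover have "finite C" using C \<open>finite X\<close> finite_subset by blast
    ultimately have "card D < card C" by (simp add: psubset_card_mono)
    thus "D \<in> Ind" using C_min[of D] C(1) \<open>D \<subset> C\<close> by fastforce
  qed
  thus ?thesis using C that by auto
qed

lemma circuit_nonempty: "circuit M C \<Longrightarrow> C \<noteq> {}"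
  using empty_indep unfolding circuit_def by auto

lemma rk_circuit_less_card:
  assumes "circuit M C" shows "r C < card C"
proof -
  have "finite C" using assms finite_subset_ground unfolding circuit_def by blast
  moreover have "C \<notin> Ind" using assms unfolding circuit_def by simp
  ultimately show ?thesis using rk_le_card[of C] indep_if_rk_eq_card[of C] by linarith
qed

lemma rk_circuit_Diff_single:
  assumes C: "circuit M C" and e: "e \<in> C"
  shows "r (C - {e}) = r C"
proof -
  have "finite C" using C finite_subset_ground unfolding circuit_def by blast
  have "C - {e} \<in> Ind" using C e unfolding circuit_def by auto
  hence "r (C - {e}) = card C - 1" using rk_indep \<open>finite C\<close> e by simp
  moreover have "r (C - {e}) \<le> r C" by (intro rk_mono) auto
  ultimately show ?thesis using rk_circuit_less_card[OF C] by simp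
qed

lemma circuit_through_element:
  assumes "F \<subseteq> S" "e \<in> F" "r (F - {e}) = r F"
  obtains C where "circuit M C" "C \<subseteq> F" "e \<in> C"
proof -
  obtain B where B: "B \<in> Ind" "B \<subseteq> F - {e}" "card B = r (F - {e})" by (rule obtain_basis)
  have "finite B" "e \<notin> B" using B finite_indep by auto
  have "insert e B \<subseteq> S" using B assms(1,2) by auto
  moreover have "insert e B \<notin> Ind"
  proof
    assume "insert e B \<in> Ind"
    hence "card (insert e B) \<le> r F" using B assms(2) by (intro indep_card_le_rk) auto
    thus False using \<open>finite B\<close> \<open>e \<notin> B\<close> B(3) assms(3) by simp
  qed
  ultimately obtain C where C: "C \<subseteq> insert e B" "circuit M C"
    by (rule dependent_contains_circuit)
  have "e \<in> C"
  proof (rule ccontr)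
    assume "e \<notin> C"
    hence "C \<in> Ind" using C(1) indep_subset[OF B(1)] by auto
    thus False using C(2) unfolding circuit_def by auto
  qed
  moreover have "C \<subseteq> F" using C(1) B(2) assms(2) by auto
  ultimately show ?thesis using that C(2) by blast
qed

lemma cyclic_flat_iff: "cyclic_flat M F \<longleftrightarrow> flat M F \<and> (\<forall>e\<in>F. r (F - {e}) = r F)"
proof
  assume cf: "cyclic_flat M F"
  have "r (F - {e}) = r F" if e: "e \<in> F" for e
  proof -
    obtain C where C: "circuit M C" "C \<subseteq> F" "e \<in> C"
      using cf e unfolding cyclic_flat_def by blast
    have "(F - {e}) \<union> C = F" "(F - {e}) \<inter> C = C - {e}" using C e by auto
    hence "r F + r (C - {e}) \<le> r (F - {e}) + r C" using rk_submodular[of "F - {e}" C] by simp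
    moreover have "r (F - {e}) \<le> r F" by (intro rk_mono) auto
    ultimately show ?thesis using rk_circuit_Diff_single[OF C(1,3)] by simp
  qed
  thus "flat M F \<and> (\<forall>e\<in>F. r (F - {e}) = r F)" using cf unfolding cyclic_flat_def by simp
next
  assume h: "flat M F \<and> (\<forall>e\<in>F. r (F - {e}) = r F)"
  hence "F \<subseteq> S" unfolding flat_def by auto
  have "F \<subseteq> \<Union>{C. circuit M C \<and> C \<subseteq> F}"
  proof
    fix e assume "e \<in> F"
    then obtain C where "circuit M C" "C \<subseteq> F" "e \<in> C"
      using circuit_through_element \<open>F \<subseteq> S\<close> h by metis
    thus "e \<in> \<Union>{C. circuit M C \<and> C \<subseteq> F}" by auto
  qed
  thus "cyclic_flat M F" using h unfolding cyclic_flat_def by auto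
qed

lemma cyclic_flat_cl_circuit: "circuit M C \<Longrightarrow> cyclic_flat M (cl C)"
proof -
  assume C: "circuit M C"
  have CS: "C \<subseteq> S" using C unfolding circuit_def by auto
  have "r (cl C - {e}) = r (cl C)" if "e \<in> cl C" for e
  proof -
    have "r (C - {e}) = r C" using rk_circuit_Diff_single[OF C] by (cases "e \<in> C") auto
    moreover have "r (C - {e}) \<le> r (cl C - {e})" using subset_cl[OF CS] by (intro rk_mono) auto
    moreover have "r (cl C - {e}) \<le> r (cl C)" by (intro rk_mono) auto
    ultimately show ?thesis using rk_cl[OF CS] by simp
  qed
  thus ?thesis unfolding cyclic_flat_iff using flat_cl[OF CS] by simp
qed

end

definition cyclic_comparable :: "'a matroid \<Rightarrow> 'a set \<Rightarrow> bool" where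
  "cyclic_comparable M X \<longleftrightarrow> X \<subseteq> fst M \<and> (\<forall>F. cyclic_flat M F \<longrightarrow> F \<subseteq> X \<or> X \<subseteq> F)"

text \<open>The independent sets of \<open>M(\<emptyset>,X) \<box> M(X,S)\<close> are the sets \<open>A\<close> with \<open>A \<inter> X\<close> independent
  and \<open>card A \<le> rk M (A \<union> X)\<close>, so \<open>free_split M X\<close> means \<open>M = M(\<emptyset>,X) \<box> M(X,S)\<close>
  (see \<open>restrict_contract_iff_free_split\<close>).\<close>
definition free_split :: "'a matroid \<Rightarrow> 'a set \<Rightarrow> bool" where
  "free_split M X \<longleftrightarrow>
     (\<forall>A. A \<subseteq> fst M \<and> A \<inter> X \<in> snd M \<and> card A \<le> rk M (A \<union> X) \<longrightarrow> A \<in> snd M)"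

context is_matroid
begin

lemma cyclic_comparable_if_free_split:
  assumes XS: "X \<subseteq> S" and split: "free_split M X"
  shows "cyclic_comparable M X"
  unfolding cyclic_comparable_def
proof (intro conjI allI impI XS)
  fix F assume cf: "cyclic_flat M F"
  show "F \<subseteq> X \<or> X \<subseteq> F"
  proof (rule ccontr)
    assume "\<not> (F \<subseteq> X \<or> X \<subseteq> F)"
    then obtain e x where e: "e \<in> F" "e \<notin> X" and x: "x \<in> X" "x \<notin> F" by auto
    have fl: "flat M F" and cy: "r (F - {e}) = r F" using cf cyclic_flat_iff e by auto
    have FS: "F \<subseteq> S" using fl unfolding flat_def by auto
    obtain B where B: "B \<in> Ind" "B \<subseteq> F - {e}" "card B = r (F - {e})" by (rule obtain_basis)
    have "finite B" "e \<notin> B" using B finite_indep by auto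
    let ?A = "insert e B"
    have card_A: "card ?A = Suc (r F)" using \<open>finite B\<close> \<open>e \<notin> B\<close> B(3) cy by simp
    \<comment> \<open>\<open>?A \<inter> X \<subseteq> B\<close> is independent and \<open>?A \<union> X\<close> has rank at least \<open>r F + 1\<close>, so the
      free split makes \<open>?A\<close> independent; but \<open>?A \<subseteq> F\<close> has more than \<open>r F\<close> elements.\<close>
    have "?A \<inter> X \<in> Ind" using indep_subset[OF B(1)] e(2) by auto
    moreover have "card ?A \<le> r (?A \<union> X)"
    proof -
      have "r F < r (insert x F)" using fl x XS unfolding flat_def by auto
      moreover have "r (insert x F) \<le> r (F \<union> X)" using x by (intro rk_mono) auto
      moreover have "r (F \<union> X) = r ((F - {e}) \<union> X)" using rk_Un_Diff_single[OF e(1) cy] by simp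
      moreover have "r (B \<union> X) = r ((F - {e}) \<union> X)" using rk_Un_basis[of B "F - {e}" X] B by simp
      moreover have "r (B \<union> X) \<le> r (?A \<union> X)" by (intro rk_mono) auto
      ultimately show ?thesis using card_A by linarith
    qed
    moreover have "?A \<subseteq> S" using B e FS by auto
    ultimately have "?A \<in> Ind" using split unfolding free_split_def by blast
    hence "card ?A \<le> r F" using B e by (intro indep_card_le_rk) auto
    thus False using card_A by simp
  qed
qed

lemma free_split_if_cyclic_comparable:
  assumes comp: "cyclic_comparable M X"
  shows "free_split M X"
  unfolding free_split_def
proof (intro allI impI)
  fix A assume A: "A \<subseteq> S \<and> A \<inter> X \<in> Ind \<and> card A \<le> r (A \<union> X)"
  have "finite A" using A finite_subset_ground by blast
  show "A \<in> Ind"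
  proof (rule ccontr)
    assume "A \<notin> Ind"
    then obtain C where C: "C \<subseteq> A" "circuit M C"
      using A by (metis dependent_contains_circuit)
    have CS: "C \<subseteq> S" using C unfolding circuit_def by auto
    have "\<not> C \<subseteq> X"
    proof
      assume "C \<subseteq> X"
      hence "C \<subseteq> A \<inter> X" using C(1) by blast
      hence "C \<in> Ind" using A indep_subset by blast
      thus False using C unfolding circuit_def by auto
    qed
    hence "\<not> cl C \<subseteq> X" using subset_cl[OF CS] by auto
    hence "X \<subseteq> cl C" using comp cyclic_flat_cl_circuit[OF C(2)] unfolding cyclic_comparable_def by blast
    hence "r (A \<union> X) \<le> r (A \<union> cl C)" by (intro rk_mono) auto
    also have "\<dots> = r A" using rk_Un_cl[OF C(1)] .
    finally have "r A = card A" using A rk_le_card[OF \<open>finite A\<close>] by simp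
    thus False using indep_if_rk_eq_card \<open>finite A\<close> \<open>A \<notin> Ind\<close> by blast
  qed
qed

lemma free_split_iff_cyclic_comparable: "X \<subseteq> S \<Longrightarrow> free_split M X \<longleftrightarrow> cyclic_comparable M X"
  using cyclic_comparable_if_free_split free_split_if_cyclic_comparable by blast

end

section \<open>Minors\<close>

lemma fst_minor [simp]: "fst (minor N A B) = B - A"
  by (simp add: minor_def)

lemma indep_minor_iff: "X \<in> snd (minor N A B) \<longleftrightarrow> X \<subseteq> B - A \<and> rk N (X \<union> A) = card X + rk N A"
  by (simp add: minor_def)

context is_matroid
begin

lemma indep_minor_subset:
  assumes ZS: "Z \<subseteq> S" and X: "X \<in> snd (minor M Y Z)" and X'X: "X' \<subseteq> X"
  shows "X' \<in> snd (minor M Y Z)"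
proof -
  have XZ: "X \<subseteq> Z - Y" and rX: "r (X \<union> Y) = card X + r Y" using X by (auto simp: indep_minor_iff)
  have "finite X" using XZ ZS by (intro finite_subset_ground) auto
  hence "finite X'" using X'X finite_subset by blast
  have "r (Y \<union> X') \<le> r Y + card X'" using \<open>finite X'\<close> by (rule rk_Un_le)
  moreover have "r ((X' \<union> Y) \<union> (X - X')) \<le> r (X' \<union> Y) + card (X - X')"
    using \<open>finite X\<close> by (intro rk_Un_le) auto
  moreover have "(X' \<union> Y) \<union> (X - X') = X \<union> Y" "Y \<union> X' = X' \<union> Y" using X'X by auto
  moreover have "card X = card X' + card (X - X')"
    using \<open>finite X\<close> X'X by (metis card_Diff_subset card_mono le_add_diff_inverse \<open>finite X'\<close>)
  ultimately have "r (X' \<union> Y) = card X' + r Y" using rX by simp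
  thus ?thesis using XZ X'X by (auto simp: indep_minor_iff)
qed

lemma indep_minor_augment:
  assumes ZS: "Z \<subseteq> S" and X: "X \<in> snd (minor M Y Z)" and X': "X' \<in> snd (minor M Y Z)"
    and lt: "card X < card X'"
  shows "\<exists>y\<in>X' - X. insert y X \<in> snd (minor M Y Z)"
proof -
  have XZ: "X \<subseteq> Z - Y" and rX: "r (X \<union> Y) = card X + r Y"
    and X'Z: "X' \<subseteq> Z - Y" and rX': "r (X' \<union> Y) = card X' + r Y"
    using X X' by (auto simp: indep_minor_iff)
  have "r (X' \<union> Y) \<le> r ((X \<union> Y) \<union> X')" by (intro rk_mono) auto
  hence "r (X \<union> Y) < r ((X \<union> Y) \<union> X')" using rX rX' lt by simp
  then obtain y where y: "y \<in> X'" "r (X \<union> Y) < r (insert y (X \<union> Y))"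
    using rk_increase_single by blast
  have yn: "y \<notin> X \<union> Y" using y(2) by (metis insert_absorb less_irrefl)
  have "finite X" using XZ ZS by (intro finite_subset_ground) auto
  have "r (insert y (X \<union> Y)) \<le> Suc (r (X \<union> Y))" by (rule rk_insert_le)
  hence "r (insert y X \<union> Y) = card (insert y X) + r Y" using y yn rX \<open>finite X\<close> by simp
  moreover have "insert y X \<subseteq> Z - Y" using XZ X'Z y by auto
  ultimately have "insert y X \<in> snd (minor M Y Z)" by (simp add: indep_minor_iff)
  thus ?thesis using y(1) yn by blast
qed

lemma matroid_minor:
  assumes "Z \<subseteq> S" shows "matroid (minor M Y Z)"
  unfolding matroid_def
proof (intro conjI allI impI)
  show "finite (fst (minor M Y Z))" using assms by (intro finite_subset_ground) auto
  show "snd (minor M Y Z) \<subseteq> Pow (fst (minor M Y Z))" "{} \<in> snd (minor M Y Z)"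
    by (auto simp: indep_minor_iff rk_empty)
  show "X' \<in> snd (minor M Y Z)" if "X \<in> snd (minor M Y Z) \<and> X' \<subseteq> X" for X X'
    using indep_minor_subset[OF assms] that by blast
  show "\<exists>y\<in>X' - X. insert y X \<in> snd (minor M Y Z)"
    if "X \<in> snd (minor M Y Z) \<and> X' \<in> snd (minor M Y Z) \<and> card X < card X'" for X X'
    using indep_minor_augment[OF assms] that by blast
qed

lemma is_matroid_minor: "Z \<subseteq> S \<Longrightarrow> is_matroid (minor M Y Z)"
  unfolding is_matroid_def by (rule matroid_minor)

lemma minor_basis_exists:
  assumes "X \<subseteq> Z - Y"
  shows "\<exists>I \<subseteq> X. I \<in> snd (minor M Y Z) \<and> card I = r (X \<union> Y) - r Y"
proof -
  obtain J where J: "J \<in> Ind" "J \<subseteq> Y" "card J = r Y" by (rule obtain_basis)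
  obtain K where K: "K \<in> Ind" "J \<subseteq> K" "K \<subseteq> X \<union> Y" "card K = r (X \<union> Y)"
    using extend_to_basis[of J "X \<union> Y"] J by blast
  have fK: "finite K" using K finite_indep by auto
  let ?I = "K - Y"
  have IX: "?I \<subseteq> X" using K by auto
  have "card K \<le> r (?I \<union> Y)" using K by (intro indep_card_le_rk) auto
  moreover have "r (?I \<union> Y) \<le> r (X \<union> Y)" using IX by (intro rk_mono) auto
  ultimately have e1: "r (?I \<union> Y) = r (X \<union> Y)" using K by simp
  have "K \<inter> Y \<in> Ind" using indep_subset[OF K(1)] by blast
  hence "card (K \<inter> Y) \<le> r Y" by (intro indep_card_le_rk) auto
  moreover have "card J \<le> card (K \<inter> Y)" using J K fK by (intro card_mono) auto
  ultimately have e2: "card (K \<inter> Y) = r Y" using J by simp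
  have e3: "card ?I = card K - card (K \<inter> Y)" using fK by (simp add: card_Diff_subset_Int)
  have "card (K \<inter> Y) \<le> card K" using fK by (intro card_mono) auto
  hence "card ?I = r (X \<union> Y) - r Y" "r (?I \<union> Y) = card ?I + r Y" using e1 e2 e3 K by simp_all
  thus ?thesis using IX assms by (intro exI[of _ ?I]) (auto simp: indep_minor_iff)
qed

lemma rk_minor:
  assumes ZS: "Z \<subseteq> S" and X: "X \<subseteq> Z - Y"
  shows "rk (minor M Y Z) X = r (X \<union> Y) - r Y"
proof -
  interpret N: is_matroid "minor M Y Z" using ZS by (rule is_matroid_minor)
  have "rk (minor M Y Z) X \<le> r (X \<union> Y) - r Y"
  proof (rule N.rk_leI)
    fix I assume I: "I \<in> snd (minor M Y Z)" "I \<subseteq> X"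
    hence "r (I \<union> Y) = card I + r Y" by (simp add: indep_minor_iff)
    moreover have "r (I \<union> Y) \<le> r (X \<union> Y)" using I by (intro rk_mono) auto
    ultimately show "card I \<le> r (X \<union> Y) - r Y" by simp
  qed
  moreover have "r (X \<union> Y) - r Y \<le> rk (minor M Y Z) X"
    using minor_basis_exists[OF X] N.indep_card_le_rk by metis
  ultimately show ?thesis by simp
qed

lemma minor_minor:
  assumes ZS: "Z \<subseteq> S" and CD: "C \<subseteq> D" and DZ: "D \<subseteq> Z - Y"
  shows "minor (minor M Y Z) C D = minor M (Y \<union> C) (Y \<union> D)"
proof -
  have ground: "D - C = (Y \<union> D) - (Y \<union> C)" using DZ by auto
  have "rk (minor M Y Z) (X \<union> C) = card X + rk (minor M Y Z) C
      \<longleftrightarrow> r (X \<union> (Y \<union> C)) = card X + r (Y \<union> C)" if X: "X \<subseteq> D - C" for X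
  proof -
    have "rk (minor M Y Z) (X \<union> C) = r (X \<union> C \<union> Y) - r Y"
      using X CD DZ by (intro rk_minor ZS) auto
    moreover have "rk (minor M Y Z) C = r (C \<union> Y) - r Y" using CD DZ by (intro rk_minor ZS) auto
    moreover have "r Y \<le> r (C \<union> Y)" "r (C \<union> Y) \<le> r (X \<union> C \<union> Y)" by (intro rk_mono; auto)+
    moreover have "X \<union> C \<union> Y = X \<union> (Y \<union> C)" "C \<union> Y = Y \<union> C" by auto
    ultimately show ?thesis by auto
  qed
  hence "snd (minor (minor M Y Z) C D) = snd (minor M (Y \<union> C) (Y \<union> D))"
    unfolding indep_minor_iff set_eq_iff ground by blast
  thus ?thesis using ground by (simp add: prod_eq_iff)
qed

lemma minor_empty_ground: "minor M {} S = M"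
proof -
  have "X \<in> snd (minor M {} S) \<longleftrightarrow> X \<in> Ind" for X
    using finite_subset_ground[of X] indep_if_rk_eq_card[of X] rk_indep[of X] indep_subset_ground[of X]
    by (auto simp: indep_minor_iff rk_empty)
  thus ?thesis by (simp add: prod_eq_iff set_eq_iff)
qed


lemma lam_minor:
  assumes "Y \<subseteq> W" "W \<subseteq> S" "X \<subseteq> W - Y"
  shows "lam (minor M Y W) X = r W - r (X \<union> Y)"
proof -
  have "rk (minor M Y W) (W - Y) = r W - r Y"
    using rk_minor[of W "W - Y" Y] assms by (simp add: Un_absorb2)
  moreover have "rk (minor M Y W) X = r (X \<union> Y) - r Y" using assms by (intro rk_minor) auto
  moreover have "r Y \<le> r (X \<union> Y)" by (intro rk_mono) auto
  ultimately show ?thesis unfolding lam_def by simp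
qed

lemma nu_minor:
  assumes "Z \<subseteq> S" "X \<subseteq> Z - W"
  shows "nu (minor M W Z) X = card X - (r (X \<union> W) - r W)"
  unfolding nu_def using assms by (simp add: rk_minor)

lemma indep_free_prod_minors_iff:
  assumes YW: "Y \<subseteq> W" and WZ: "W \<subseteq> Z" and ZS: "Z \<subseteq> S" and A: "A \<subseteq> Z - Y"
  shows "A \<in> snd (free_prod (minor M Y W) (minor M W Z))
    \<longleftrightarrow> r ((A \<inter> W) \<union> Y) = card (A \<inter> W) + r Y \<and> card A + r Y \<le> r (A \<union> W)"
proof -
  have "finite A" using A ZS by (intro finite_subset_ground) auto
  have AW: "A \<inter> (W - Y) = A \<inter> W" "A \<inter> (Z - W) = A - W" using A by auto
  have "card A = card (A \<inter> W) + card (A - W)"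
    using \<open>finite A\<close> by (metis Int_Diff_Un Int_Diff_disjoint card_Un_disjoint finite_Diff finite_Int)
  moreover have "r Y \<le> r ((A \<inter> W) \<union> Y)" "r ((A \<inter> W) \<union> Y) \<le> r W" "r W \<le> r (A \<union> W)"
    using YW by (intro rk_mono; auto)+
  moreover have "r (A \<union> W) \<le> r W + card (A - W)"
    using rk_Un_le[of "A - W" W] \<open>finite A\<close> by (simp add: Un_commute)
  moreover have "lam (minor M Y W) (A \<inter> W) = r W - r ((A \<inter> W) \<union> Y)"
    using YW WZ ZS A by (intro lam_minor) auto
  moreover have "nu (minor M W Z) (A - W) = card (A - W) - (r (A \<union> W) - r W)"
    using nu_minor[of Z "A - W" W] ZS A by auto
  moreover have "A \<inter> W \<in> snd (minor M Y W) \<longleftrightarrow> r ((A \<inter> W) \<union> Y) = card (A \<inter> W) + r Y"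
    using A by (auto simp: indep_minor_iff)
  moreover have "A \<subseteq> (W - Y) \<union> (Z - W)" using A by auto
  ultimately show ?thesis unfolding free_prod_def by (simp add: AW) linarith
qed

lemma indep_minor_free_prod_bounds:
  assumes YW: "Y \<subseteq> W" and ZS: "Z \<subseteq> S" and A: "A \<in> snd (minor M Y Z)"
  shows "r ((A \<inter> W) \<union> Y) = card (A \<inter> W) + r Y \<and> card A + r Y \<le> r (A \<union> W)"
proof -
  have AZ: "A \<subseteq> Z - Y" and rA: "r (A \<union> Y) = card A + r Y" using A by (auto simp: indep_minor_iff)
  have "finite A" using AZ ZS by (intro finite_subset_ground) auto
  have "card A = card (A \<inter> W) + card (A - W)"
    using \<open>finite A\<close> by (metis Int_Diff_Un Int_Diff_disjoint card_Un_disjoint finite_Diff finite_Int)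
  moreover have "r (Y \<union> (A \<inter> W)) \<le> r Y + card (A \<inter> W)" using \<open>finite A\<close> by (intro rk_Un_le) auto
  moreover have "r (((A \<inter> W) \<union> Y) \<union> (A - W)) \<le> r ((A \<inter> W) \<union> Y) + card (A - W)"
    using \<open>finite A\<close> by (intro rk_Un_le) auto
  moreover have "((A \<inter> W) \<union> Y) \<union> (A - W) = A \<union> Y" "Y \<union> (A \<inter> W) = (A \<inter> W) \<union> Y" by auto
  moreover have "r (A \<union> Y) \<le> r (A \<union> W)" using YW by (intro rk_mono) auto
  ultimately show ?thesis using rA by simp
qed

lemma indep_minor_if_free_prod_bounds:
  assumes YW: "Y \<subseteq> W" and ZS: "Z \<subseteq> S" and split: "free_split M W" and A: "A \<subseteq> Z - Y"
    and bounds: "r ((A \<inter> W) \<union> Y) = card (A \<inter> W) + r Y" "card A + r Y \<le> r (A \<union> W)"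
  shows "A \<in> snd (minor M Y Z)"
proof -
  \<comment> \<open>Adjoin a basis \<open>B\<close> of \<open>Y\<close> to \<open>A\<close> and apply the free split to \<open>B \<union> A\<close>.\<close>
  obtain B where B: "B \<in> Ind" "B \<subseteq> Y" "card B = r Y" by (rule obtain_basis)
  have "finite A" using A ZS by (intro finite_subset_ground) auto
  have "finite B" using B finite_indep by auto
  have "B \<inter> A = {}" using A B by auto
  have "r (B \<union> (A \<inter> W)) = r ((A \<inter> W) \<union> Y)"
    using rk_Un_basis[of B Y "A \<inter> W"] B by (simp add: Un_commute)
  also have "\<dots> = card B + card (A \<inter> W)" using bounds(1) B(3) by simp
  also have "\<dots> = card (B \<union> (A \<inter> W))"
    using \<open>finite A\<close> \<open>finite B\<close> \<open>B \<inter> A = {}\<close> by (intro card_Un_disjoint[symmetric]) auto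
  finally have "r (B \<union> (A \<inter> W)) = card (B \<union> (A \<inter> W))" .
  hence "B \<union> (A \<inter> W) \<in> Ind" using \<open>finite A\<close> \<open>finite B\<close> by (intro indep_if_rk_eq_card) auto
  moreover have "(B \<union> A) \<inter> W = B \<union> (A \<inter> W)" using B YW by auto
  ultimately have "(B \<union> A) \<inter> W \<in> Ind" by simp
  moreover have card_BA: "card (B \<union> A) = card B + card A"
    using \<open>finite A\<close> \<open>finite B\<close> \<open>B \<inter> A = {}\<close> by (intro card_Un_disjoint) auto
  moreover have "(B \<union> A) \<union> W = A \<union> W" using B YW by auto
  moreover have "B \<union> A \<subseteq> S" using indep_subset_ground[OF B(1)] A ZS by auto
  ultimately have "B \<union> A \<in> Ind" using split bounds(2) B(3) unfolding free_split_def by auto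
  hence "r (B \<union> A) = card B + card A" using rk_indep card_BA by simp
  moreover have "r (B \<union> A) = r (A \<union> Y)" using rk_Un_basis[of B Y A] B by (simp add: Un_commute)
  ultimately show ?thesis using A B(3) by (simp add: indep_minor_iff)
qed

lemma minor_eq_free_prod:
  assumes YW: "Y \<subseteq> W" and WZ: "W \<subseteq> Z" and ZS: "Z \<subseteq> S" and split: "free_split M W"
  shows "minor M Y Z = free_prod (minor M Y W) (minor M W Z)"
proof -
  have "A \<in> snd (minor M Y Z) \<longleftrightarrow> A \<in> snd (free_prod (minor M Y W) (minor M W Z))" for A
  proof (cases "A \<subseteq> Z - Y")
    case True
    thus ?thesis using indep_free_prod_minors_iff[OF YW WZ ZS True]
      indep_minor_free_prod_bounds[OF YW ZS] indep_minor_if_free_prod_bounds[OF YW ZS split True]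
      by blast
  next
    case False
    thus ?thesis using YW WZ by (auto simp: indep_minor_iff free_prod_def)
  qed
  moreover have "fst (free_prod (minor M Y W) (minor M W Z)) = Z - Y"
    using YW WZ by (auto simp: free_prod_def)
  ultimately show ?thesis by (simp add: prod_eq_iff set_eq_iff)
qed

lemma restrict_contract_iff_free_split:
  assumes WS: "W \<subseteq> S"
  shows "M = free_prod (minor M {} W) (minor M W S) \<longleftrightarrow> free_split M W"
proof
  assume M: "M = free_prod (minor M {} W) (minor M W S)"
  show "free_split M W" unfolding free_split_def
  proof (intro allI impI)
    fix A assume A: "A \<subseteq> S \<and> A \<inter> W \<in> Ind \<and> card A \<le> r (A \<union> W)"
    hence "A \<in> snd (free_prod (minor M {} W) (minor M W S))"
      using indep_free_prod_minors_iff[of "{}" W S A] WS rk_indep by (simp add: rk_empty)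
    thus "A \<in> Ind" using M by simp
  qed
next
  assume "free_split M W"
  hence "minor M {} S = free_prod (minor M {} W) (minor M W S)" using WS by (intro minor_eq_free_prod) auto
  thus "M = free_prod (minor M {} W) (minor M W S)" using minor_empty_ground by simp
qed


lemma free_split_minor:
  assumes YW: "Y \<subseteq> W" and WZ: "W \<subseteq> Z" and ZS: "Z \<subseteq> S" and split: "free_split M W"
  shows "free_split (minor M Y Z) (W - Y)"
proof -
  let ?N = "minor M Y Z"
  interpret N: is_matroid ?N using ZS by (rule is_matroid_minor)
  have "?N = free_prod (minor M Y W) (minor M W Z)" using YW WZ ZS split by (rule minor_eq_free_prod)
  moreover have "minor ?N {} (W - Y) = minor M Y W"
  proof -
    have "minor ?N {} (W - Y) = minor M (Y \<union> {}) (Y \<union> (W - Y))"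
      using YW WZ ZS by (intro minor_minor) auto
    moreover have "Y \<union> {} = Y" "Y \<union> (W - Y) = W" using YW by auto
    ultimately show ?thesis by simp
  qed
  moreover have "minor ?N (W - Y) (Z - Y) = minor M W Z"
  proof -
    have "minor ?N (W - Y) (Z - Y) = minor M (Y \<union> (W - Y)) (Y \<union> (Z - Y))"
      using YW WZ ZS by (intro minor_minor) auto
    moreover have "Y \<union> (W - Y) = W" "Y \<union> (Z - Y) = Z" using YW WZ by auto
    ultimately show ?thesis by simp
  qed
  moreover have "fst ?N = Z - Y" by simp
  ultimately have "?N = free_prod (minor ?N {} (W - Y)) (minor ?N (W - Y) (fst ?N))" by simp
  thus ?thesis using N.restrict_contract_iff_free_split[of "W - Y"] WZ by auto
qed

lemma cyclic_comparable_minor: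
  assumes YW: "Y \<subseteq> W" and WZ: "W \<subseteq> Z" and ZS: "Z \<subseteq> S" and W: "cyclic_comparable M W"
  shows "cyclic_comparable (minor M Y Z) (W - Y)"
proof -
  interpret N: is_matroid "minor M Y Z" using ZS by (rule is_matroid_minor)
  have "free_split M W" using free_split_if_cyclic_comparable W by blast
  hence "free_split (minor M Y Z) (W - Y)" using free_split_minor YW WZ ZS by blast
  moreover have "W - Y \<subseteq> fst (minor M Y Z)" using WZ by auto
  ultimately show ?thesis using N.free_split_iff_cyclic_comparable by blast
qed

lemma rk_minor_Diff:
  assumes "Z \<subseteq> S" "Y \<subseteq> X" "X \<subseteq> Z"
  shows "rk (minor M Y Z) (X - Y) = r X - r Y"
proof -
  have "X - Y \<union> Y = X" using assms(2) by auto
  thus ?thesis using rk_minor[of Z "X - Y" Y] assms by auto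
qed

lemma cyclic_flat_minor:
  assumes YF: "Y \<subseteq> F" and FZ: "F \<subseteq> Z" and ZS: "Z \<subseteq> S" and cf: "cyclic_flat M F"
  shows "cyclic_flat (minor M Y Z) (F - Y)"
proof -
  interpret N: is_matroid "minor M Y Z" using ZS by (rule is_matroid_minor)
  have fl: "flat M F" and cy: "\<forall>e\<in>F. r (F - {e}) = r F" using cf cyclic_flat_iff by auto
  have rY: "r Y \<le> r X" if "Y \<subseteq> X" for X using that by (rule rk_mono)
  have "flat (minor M Y Z) (F - Y)" unfolding flat_def
  proof (intro conjI ballI)
    show "F - Y \<subseteq> fst (minor M Y Z)" using FZ by auto
    fix x assume x: "x \<in> fst (minor M Y Z) - (F - Y)"
    hence "x \<in> S - F" "insert x (F - Y) = insert x F - Y" using ZS by auto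
    moreover have "rk (minor M Y Z) (insert x F - Y) = r (insert x F) - r Y"
      using x YF FZ ZS by (intro rk_minor_Diff) auto
    moreover have "r F < r (insert x F)" using fl \<open>x \<in> S - F\<close> unfolding flat_def by auto
    ultimately show "rk (minor M Y Z) (F - Y) < rk (minor M Y Z) (insert x (F - Y))"
      using rY[of F] YF rk_minor_Diff[OF ZS YF FZ] by auto
  qed
  moreover have "rk (minor M Y Z) (F - Y - {e}) = rk (minor M Y Z) (F - Y)" if e: "e \<in> F - Y" for e
  proof -
    have "F - Y - {e} = (F - {e}) - Y" by auto
    moreover have "rk (minor M Y Z) ((F - {e}) - Y) = r (F - {e}) - r Y"
      using e YF FZ ZS by (intro rk_minor_Diff) auto
    ultimately show ?thesis using cy e rk_minor_Diff[OF ZS YF FZ] by simp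
  qed
  ultimately show ?thesis using N.cyclic_flat_iff by simp
qed

lemma cyclic_comparable_lift:
  assumes YZ: "Y \<subseteq> Z" and ZS: "Z \<subseteq> S" and pY: "cyclic_comparable M Y" and pZ: "cyclic_comparable M Z"
    and WZ: "W \<subseteq> Z - Y" and pW: "cyclic_comparable (minor M Y Z) W"
  shows "cyclic_comparable M (Y \<union> W)"
  unfolding cyclic_comparable_def
proof (intro conjI allI impI)
  show "Y \<union> W \<subseteq> S" using YZ ZS WZ by auto
  fix F assume cf: "cyclic_flat M F"
  show "F \<subseteq> Y \<union> W \<or> Y \<union> W \<subseteq> F"
  proof (cases "F \<subseteq> Y")
    case True thus ?thesis by auto
  next
    case False
    hence YF: "Y \<subseteq> F" using pY cf unfolding cyclic_comparable_def by blast
    show ?thesis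
    proof (cases "Z \<subseteq> F")
      case True thus ?thesis using WZ YF YZ by auto
    next
      case False
      hence FZ: "F \<subseteq> Z" using pZ cf unfolding cyclic_comparable_def by blast
      have "cyclic_flat (minor M Y Z) (F - Y)" using YF FZ ZS cf by (rule cyclic_flat_minor)
      hence "F - Y \<subseteq> W \<or> W \<subseteq> F - Y" using pW unfolding cyclic_comparable_def by blast
      thus ?thesis using YF by auto
    qed
  qed
qed

lemma uniform_if_trivial_cyclic_flats:
  assumes trivial: "\<forall>F. cyclic_flat M F \<longrightarrow> F = {} \<or> F = S"
  shows "uniform M"
  unfolding uniform_def
proof (intro exI[of _ "r S"] set_eqI iffI)
  fix X assume X: "X \<in> Ind"
  hence "card X \<le> r S" using indep_subset_ground by (intro indep_card_le_rk) auto
  thus "X \<in> {X. X \<subseteq> S \<and> card X \<le> r S}" using X indep_subset_ground by auto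
next
  fix X assume X: "X \<in> {X. X \<subseteq> S \<and> card X \<le> r S}"
  show "X \<in> Ind"
  proof (rule ccontr)
    assume "X \<notin> Ind"
    then obtain C where C: "C \<subseteq> X" "circuit M C" using X by (metis dependent_contains_circuit mem_Collect_eq)
    have CS: "C \<subseteq> S" using C unfolding circuit_def by auto
    have "cl C \<noteq> {}" using subset_cl[OF CS] circuit_nonempty[OF C(2)] by auto
    hence "cl C = S" using trivial cyclic_flat_cl_circuit[OF C(2)] by blast
    hence "r S = r C" using rk_cl[OF CS] by simp
    moreover have "r C < card C" using rk_circuit_less_card[OF C(2)] .
    moreover have "card C \<le> card X" using C X by (intro card_mono finite_subset_ground) auto
    ultimately show False using X by simp
  qed
qed

lemma trivial_cyclic_flat_if_uniform:
  assumes u: "uniform M" and cf: "cyclic_flat M F"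
  shows "F = {} \<or> F = S"
proof (rule ccontr)
  assume nF: "\<not> (F = {} \<or> F = S)"
  obtain k where k: "Ind = {X. X \<subseteq> S \<and> card X \<le> k}" using u unfolding uniform_def by auto
  have fl: "flat M F" and cy: "\<forall>e\<in>F. r (F - {e}) = r F" using cf cyclic_flat_iff by auto
  have FS: "F \<subseteq> S" using fl unfolding flat_def by auto
  have fF: "finite F" using FS by (rule finite_subset_ground)
  obtain e where e: "e \<in> F" using nF by auto
  obtain x where x: "x \<in> S - F" using nF FS by auto
  show False
  proof (cases "card F \<le> k")
    case True
    hence "F \<in> Ind" using k FS by auto
    have "F - {e} \<in> Ind" using \<open>F \<in> Ind\<close> by (rule indep_subset) auto
    hence "r (F - {e}) = card F - 1" using rk_indep fF e by simp
    moreover have "r F = card F" using \<open>F \<in> Ind\<close> by (rule rk_indep)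
    moreover have "card F > 0" using fF e card_gt_0_iff by blast
    ultimately show False using cy e by auto
  next
    case False
    have "k \<le> card F" using False by simp
    then obtain T where T: "T \<subseteq> F" "card T = k" using obtain_subset_with_card_n[of k F] by blast
    have "T \<in> Ind" using T k FS by auto
    hence "card T \<le> r F" using T(1) by (rule indep_card_le_rk)
    hence "k \<le> r F" using T by simp
    moreover have "r (insert x F) \<le> k" by (rule rk_leI) (simp add: k)
    moreover have "r F < r (insert x F)" using fl x unfolding flat_def by auto
    ultimately show False by simp
  qed
qed

lemma trivial_cyclic_flat_if_all_comparable:
  assumes all: "\<forall>W. W \<subseteq> S \<longrightarrow> cyclic_comparable M W" and cf: "cyclic_flat M F"
  shows "F = {} \<or> F = S"
proof (rule ccontr)
  assume nF: "\<not> (F = {} \<or> F = S)"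
  have FS: "F \<subseteq> S" using cf unfolding cyclic_flat_def flat_def by auto
  obtain u where u: "u \<in> S - F" using nF FS by auto
  have "cyclic_comparable M {u}" using all u by auto
  hence "F \<subseteq> {u} \<or> {u} \<subseteq> F" using cf unfolding cyclic_comparable_def by blast
  thus False using u nF by auto
qed

lemma uniform_minor_if_comparable:
  assumes YZ: "Y \<subseteq> Z" and ZS: "Z \<subseteq> S"
    and all: "\<forall>W. Y \<subseteq> W \<and> W \<subseteq> Z \<longrightarrow> cyclic_comparable M W"
  shows "uniform (minor M Y Z)"
proof -
  let ?N = "minor M Y Z"
  interpret N: is_matroid ?N using ZS by (rule is_matroid_minor)
  have fN: "fst ?N = Z - Y" by simp
  have "\<forall>W. W \<subseteq> fst ?N \<longrightarrow> cyclic_comparable ?N W"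
  proof (intro allI impI)
    fix W assume W: "W \<subseteq> fst ?N"
    have "cyclic_comparable M (Y \<union> W)" using all W fN YZ by auto
    hence "cyclic_comparable ?N ((Y \<union> W) - Y)" using W fN YZ ZS by (intro cyclic_comparable_minor) auto
    moreover have "(Y \<union> W) - Y = W" using W fN by auto
    ultimately show "cyclic_comparable ?N W" by simp
  qed
  thus ?thesis using N.trivial_cyclic_flat_if_all_comparable N.uniform_if_trivial_cyclic_flats by blast
qed

lemma cyclic_flat_minor_uniform:
  assumes YZ: "Y \<subseteq> Z" and ZS: "Z \<subseteq> S" and u: "uniform (minor M Y Z)"
    and cf: "cyclic_flat M F" and YF: "Y \<subseteq> F" and FZ: "F \<subseteq> Z"
  shows "F = Y \<or> F = Z"
proof -
  let ?N = "minor M Y Z"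
  interpret N: is_matroid ?N using ZS by (rule is_matroid_minor)
  have fN: "fst ?N = Z - Y" by simp
  have "cyclic_flat ?N (F - Y)" using YF FZ ZS cf by (rule cyclic_flat_minor)
  hence "F - Y = {} \<or> F - Y = Z - Y" using N.trivial_cyclic_flat_if_uniform u fN by auto
  thus ?thesis using YF FZ by auto
qed

end



section \<open>Free products\<close>

lemma fst_free_prod [simp]: "fst (free_prod M N) = fst M \<union> fst N"
  by (simp add: free_prod_def)

locale free_prod_pair = n1: is_matroid N1 + n2: is_matroid N2
  for N1 N2 :: "'a matroid" +
  assumes disjoint_grounds: "fst N1 \<inter> fst N2 = {}"
begin

abbreviation "X \<equiv> fst N1"
abbreviation "T \<equiv> fst N2"
abbreviation "P \<equiv> free_prod N1 N2"

lemma card_split_grounds: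
  assumes "A \<subseteq> X \<union> T"
  shows "card A = card (A \<inter> X) + card (A \<inter> T)"
proof -
  have "finite A" using assms n1.finite_ground n2.finite_ground finite_subset by blast
  moreover have "A = (A \<inter> X) \<union> (A \<inter> T)" using assms by auto
  ultimately show ?thesis using disjoint_grounds card_Un_disjoint[of "A \<inter> X" "A \<inter> T"] by auto
qed

lemma indep_free_prod_iff:
  "A \<in> snd P \<longleftrightarrow> A \<subseteq> X \<union> T \<and> A \<inter> X \<in> snd N1 \<and> card A \<le> rk N1 X + rk N2 (A \<inter> T)"
proof -
  have "nu N2 (A \<inter> T) \<le> lam N1 (A \<inter> X) \<longleftrightarrow> card A \<le> rk N1 X + rk N2 (A \<inter> T)"
    if "A \<subseteq> X \<union> T" "A \<inter> X \<in> snd N1"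
  proof -
    have "rk N1 (A \<inter> X) = card (A \<inter> X)" "card (A \<inter> X) \<le> rk N1 X"
      using n1.rk_indep[OF that(2)] n1.indep_card_le_rk[OF that(2)] by auto
    moreover have "rk N2 (A \<inter> T) \<le> card (A \<inter> T)"
      using n2.finite_subset_ground by (intro n2.rk_le_card) auto
    ultimately show ?thesis unfolding lam_def nu_def card_split_grounds[OF that(1)] by linarith
  qed
  thus ?thesis unfolding free_prod_def by auto
qed

lemma finite_indep_free_prod: "A \<in> snd P \<Longrightarrow> finite A"
proof -
  assume "A \<in> snd P"
  hence "A \<subseteq> X \<union> T" unfolding indep_free_prod_iff by blast
  thus "finite A" using n1.finite_ground n2.finite_ground by (simp add: finite_subset)
qed

lemma indep_free_prod_subset:
  assumes A: "A \<in> snd P" and BA: "B \<subseteq> A"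
  shows "B \<in> snd P"
proof -
  have A_ground: "A \<subseteq> X \<union> T" and AX: "A \<inter> X \<in> snd N1"
    and A_card: "card A \<le> rk N1 X + rk N2 (A \<inter> T)"
    using A unfolding indep_free_prod_iff by blast+
  have "B \<inter> X \<subseteq> A \<inter> X" using BA by blast
  hence "B \<inter> X \<in> snd N1" by (rule n1.indep_subset[OF AX])
  have "finite A" using A by (rule finite_indep_free_prod)
  hence "finite B" "finite (A - B)" using finite_subset[OF BA] by auto
  have "rk N2 ((B \<inter> T) \<union> (A - B)) \<le> rk N2 (B \<inter> T) + card (A - B)"
    using \<open>finite (A - B)\<close> by (rule n2.rk_Un_le)
  moreover have "rk N2 (A \<inter> T) \<le> rk N2 ((B \<inter> T) \<union> (A - B))" by (intro n2.rk_mono) blast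
  moreover have "card A = card B + card (A - B)"
  proof -
    have "card (B \<union> (A - B)) = card B + card (A - B)"
      using \<open>finite B\<close> \<open>finite (A - B)\<close> by (intro card_Un_disjoint) auto
    moreover have "B \<union> (A - B) = A" using BA by blast
    ultimately show ?thesis by simp
  qed
  ultimately have "card B \<le> rk N1 X + rk N2 (B \<inter> T)" using A_card by linarith
  thus ?thesis using A_ground BA \<open>B \<inter> X \<in> snd N1\<close> unfolding indep_free_prod_iff by blast
qed

lemma indep_free_prod_insert:
  assumes A: "A \<in> snd P" and y: "y \<in> X \<union> T" "y \<notin> A" and yX: "insert y A \<inter> X \<in> snd N1"
    and slack: "card A < rk N1 X + rk N2 (insert y A \<inter> T)"
  shows "insert y A \<in> snd P"
proof -
  have "A \<subseteq> X \<union> T" using A unfolding indep_free_prod_iff by blast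
  moreover have "card (insert y A) = Suc (card A)"
    using finite_indep_free_prod[OF A] y(2) by simp
  ultimately show ?thesis using y(1) yX slack unfolding indep_free_prod_iff by auto
qed

lemma indep_free_prod_augment_slack:
  assumes A: "A \<in> snd P" and B: "B \<in> snd P" and lt: "card A < card B"
    and slack: "card A < rk N1 X + rk N2 (A \<inter> T)"
  shows "\<exists>y\<in>B - A. insert y A \<in> snd P"
proof -
  have A_ground: "A \<subseteq> X \<union> T" and AX: "A \<inter> X \<in> snd N1"
    and B_ground: "B \<subseteq> X \<union> T" and BX: "B \<inter> X \<in> snd N1"
    using A B indep_free_prod_iff by auto
  show ?thesis
  proof (cases "B \<inter> T \<subseteq> A")
    case False
    then obtain y where y: "y \<in> B \<inter> T" "y \<notin> A" by auto
    hence "insert y A \<inter> X = A \<inter> X" "rk N2 (A \<inter> T) \<le> rk N2 (insert y A \<inter> T)"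
      using disjoint_grounds by (auto intro: n2.rk_mono)
    hence "insert y A \<in> snd P"
      using y slack AX by (intro indep_free_prod_insert[OF A]) auto
    thus ?thesis using y by blast
  next
    case True
    hence "card (B \<inter> T) \<le> card (A \<inter> T)"
      using n2.finite_subset_ground by (intro card_mono) auto
    hence "card (A \<inter> X) < card (B \<inter> X)"
      using lt card_split_grounds[OF A_ground] card_split_grounds[OF B_ground] by linarith
    then obtain x where x: "x \<in> B \<inter> X - A \<inter> X" "insert x (A \<inter> X) \<in> snd N1"
      using n1.indep_augment[OF AX BX] by blast
    have "insert x A \<inter> X = insert x (A \<inter> X)" "A \<inter> T = insert x A \<inter> T"
      using x(1) disjoint_grounds by auto
    hence "insert x A \<in> snd P"
      using x slack by (intro indep_free_prod_insert[OF A]) auto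
    thus ?thesis using x(1) by blast
  qed
qed

lemma indep_free_prod_augment:
  assumes A: "A \<in> snd P" and B: "B \<in> snd P" and lt: "card A < card B"
  shows "\<exists>y\<in>B - A. insert y A \<in> snd P"
proof (cases "card A < rk N1 X + rk N2 (A \<inter> T)")
  case True
  thus ?thesis using indep_free_prod_augment_slack[OF A B lt] by blast
next
  case tight: False
  have AX: "A \<inter> X \<in> snd N1" and B_card: "card B \<le> rk N1 X + rk N2 (B \<inter> T)"
    using A B indep_free_prod_iff by auto
  \<comment> \<open>\<open>A\<close> meets its bound, so \<open>B \<inter> T\<close> has larger rank than \<open>A \<inter> T\<close>.\<close>
  have "rk N2 (A \<inter> T) < rk N2 (B \<inter> T)" using tight lt B_card by linarith
  also have "\<dots> \<le> rk N2 ((A \<inter> T) \<union> (B \<inter> T))" by (intro n2.rk_mono) auto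
  finally obtain y where y: "y \<in> B \<inter> T" "rk N2 (A \<inter> T) < rk N2 (insert y (A \<inter> T))"
    using n2.rk_increase_single by blast
  hence "y \<notin> A" by (metis Int_iff insert_absorb less_irrefl)
  moreover have "insert y A \<inter> T = insert y (A \<inter> T)" "insert y A \<inter> X = A \<inter> X"
    using y(1) disjoint_grounds by auto
  moreover have "card A \<le> rk N1 X + rk N2 (A \<inter> T)" using A indep_free_prod_iff by auto
  ultimately have "insert y A \<in> snd P"
    using y AX by (intro indep_free_prod_insert[OF A]) auto
  thus ?thesis using y(1) \<open>y \<notin> A\<close> by blast
qed

lemma matroid_free_prod: "matroid P"
  unfolding matroid_def
proof (intro conjI allI impI)
  show "finite (fst P)" using n1.finite_ground n2.finite_ground by simp
  show "snd P \<subseteq> Pow (fst P)" "{} \<in> snd P"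
    using indep_free_prod_iff n1.empty_indep by auto
  show "B \<in> snd P" if "A \<in> snd P \<and> B \<subseteq> A" for A B
    using indep_free_prod_subset that by blast
  show "\<exists>y\<in>B - A. insert y A \<in> snd P" if "A \<in> snd P \<and> B \<in> snd P \<and> card A < card B" for A B
    using indep_free_prod_augment that by blast
qed

end

sublocale free_prod_pair \<subseteq> prod: is_matroid "free_prod N1 N2"
  by unfold_locales (rule matroid_free_prod)

context free_prod_pair
begin

lemma rk_free_prod_Un_ground:
  assumes BT: "B \<subseteq> T"
  shows "rk P (B \<union> X) = rk N1 X + rk N2 B"
proof (rule antisym)
  obtain J where J: "J \<in> snd N1" "J \<subseteq> X" "card J = rk N1 X" by (rule n1.obtain_basis)
  obtain K where K: "K \<in> snd N2" "K \<subseteq> B" "card K = rk N2 B" by (rule n2.obtain_basis)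
  have "J \<inter> K = {}" "(J \<union> K) \<inter> X = J" "(J \<union> K) \<inter> T = K"
    using J(2) K(2) BT disjoint_grounds by auto
  moreover have "finite J" "finite K" using J(1) K(1) n1.finite_indep n2.finite_indep by auto
  ultimately have "card (J \<union> K) = rk N1 X + rk N2 B" using J(3) K(3) by (simp add: card_Un_disjoint)
  moreover have "J \<union> K \<in> snd P"
    unfolding indep_free_prod_iff
    using \<open>(J \<union> K) \<inter> X = J\<close> \<open>(J \<union> K) \<inter> T = K\<close> calculation J K BT n2.rk_indep[OF K(1)] by auto
  hence "card (J \<union> K) \<le> rk P (B \<union> X)" using J(2) K(2) by (intro prod.indep_card_le_rk) auto
  ultimately show "rk N1 X + rk N2 B \<le> rk P (B \<union> X)" by simp
next
  show "rk P (B \<union> X) \<le> rk N1 X + rk N2 B"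
  proof (rule prod.rk_leI)
    fix A assume A: "A \<in> snd P" "A \<subseteq> B \<union> X"
    hence "card A \<le> rk N1 X + rk N2 (A \<inter> T)" unfolding indep_free_prod_iff by blast
    moreover have "rk N2 (A \<inter> T) \<le> rk N2 B" using A(2) disjoint_grounds by (intro n2.rk_mono) auto
    ultimately show "card A \<le> rk N1 X + rk N2 B" by simp
  qed
qed

lemma rk_free_prod_ground1: "rk P X = rk N1 X"
  using rk_free_prod_Un_ground[of "{}"] by (simp add: n2.rk_empty)

lemma restrict_free_prod: "minor P {} X = N1"
proof -
  have "A \<in> snd (minor P {} X) \<longleftrightarrow> A \<in> snd N1" for A
  proof
    assume "A \<in> snd (minor P {} X)"
    hence A: "A \<subseteq> X" "rk P A = card A" by (auto simp: indep_minor_iff prod.rk_empty)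
    hence "A \<in> snd P" using n1.finite_subset_ground by (intro prod.indep_if_rk_eq_card) auto
    moreover have "A \<inter> X = A" using A by auto
    ultimately show "A \<in> snd N1" unfolding indep_free_prod_iff by auto
  next
    assume A: "A \<in> snd N1"
    hence AX: "A \<subseteq> X" by (rule n1.indep_subset_ground)
    have "A \<inter> X = A" "A \<inter> T = {}" using AX disjoint_grounds by auto
    moreover have "card A \<le> rk N1 X" using A AX by (rule n1.indep_card_le_rk)
    ultimately have "A \<in> snd P" using A AX unfolding indep_free_prod_iff by (auto simp: n2.rk_empty)
    thus "A \<in> snd (minor P {} X)" using AX prod.rk_indep by (auto simp: indep_minor_iff prod.rk_empty)
  qed
  thus ?thesis by (simp add: prod_eq_iff set_eq_iff)
qed

lemma contract_free_prod: "minor P X (fst P) = N2"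
proof -
  have "B \<in> snd (minor P X (fst P)) \<longleftrightarrow> B \<in> snd N2" for B
  proof
    assume "B \<in> snd (minor P X (fst P))"
    hence B: "B \<subseteq> T" "rk P (B \<union> X) = card B + rk P X"
      using disjoint_grounds by (auto simp: indep_minor_iff)
    hence "rk N2 B = card B" using rk_free_prod_Un_ground rk_free_prod_ground1 by simp
    thus "B \<in> snd N2" using B n2.finite_subset_ground by (intro n2.indep_if_rk_eq_card) auto
  next
    assume B: "B \<in> snd N2"
    hence BT: "B \<subseteq> T" by (rule n2.indep_subset_ground)
    hence "rk P (B \<union> X) = card B + rk P X"
      using rk_free_prod_Un_ground rk_free_prod_ground1 n2.rk_indep[OF B] by simp
    moreover have "B \<subseteq> fst P - X" using BT disjoint_grounds by auto
    ultimately show "B \<in> snd (minor P X (fst P))" by (simp add: indep_minor_iff)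
  qed
  moreover have "fst P - X = T" using disjoint_grounds by auto
  ultimately show ?thesis by (simp add: prod_eq_iff set_eq_iff)
qed

lemma free_split_free_prod: "free_split P X"
  using prod.restrict_contract_iff_free_split[of X] restrict_free_prod contract_free_prod by simp

end

section \<open>Flags and factorizations\<close>

lemma matroid_empty: "matroid ({}, {{}})"
  unfolding matroid_def by auto

lemma free_prod_empty_right:
  assumes "matroid N" shows "free_prod N ({}, {{}}) = N"
proof -
  have "A \<subseteq> fst N" if "A \<in> snd N" for A
    using assms that unfolding matroid_def by blast
  hence "snd (free_prod N ({}, {{}})) = snd N"
    unfolding free_prod_def nu_def by (auto simp: Int_absorb2)
  thus ?thesis by (simp add: prod_eq_iff free_prod_def)
qed

lemma free_prod_list_Cons: "matroid N \<Longrightarrow> free_prod_list (N # Ns) = free_prod N (free_prod_list Ns)"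
  by (cases Ns) (auto simp: free_prod_empty_right)

lemma fst_free_prod_list: "fst (free_prod_list Ns) = (\<Union>N\<in>set Ns. fst N)"
  by (induction Ns rule: free_prod_list.induct) auto

lemma partitions_ground_fst_free_prod_list:
  "partitions_ground Ns S \<Longrightarrow> fst (free_prod_list Ns) = S"
  unfolding partitions_ground_def fst_free_prod_list by (auto simp: set_conv_nth)

lemma partitions_ground_ConsD:
  assumes "partitions_ground (N # Ns) S"
  shows "fst N \<noteq> {}" "fst N \<subseteq> S" "partitions_ground Ns (S - fst N)"
proof -
  have nonempty: "\<forall>i<Suc (length Ns). fst ((N # Ns) ! i) \<noteq> {}"
    and disj: "\<forall>i<Suc (length Ns). \<forall>j<Suc (length Ns). i \<noteq> j \<longrightarrow> fst ((N # Ns) ! i) \<inter> fst ((N # Ns) ! j) = {}"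
    and union: "(\<Union>i<Suc (length Ns). fst ((N # Ns) ! i)) = S"
    using assms unfolding partitions_ground_def by auto
  have union': "fst N \<union> (\<Union>i<length Ns. fst (Ns ! i)) = S"
    using union unfolding lessThan_Suc_eq_insert_0 by (simp add: image_image)
  show "fst N \<noteq> {}" using nonempty by force
  show "fst N \<subseteq> S" using union' by blast
  have "fst N \<inter> fst (Ns ! i) = {}" if "i < length Ns" for i
    using disj that by (metis Suc_less_eq nat.simps(3) nth_Cons_0 nth_Cons_Suc zero_less_Suc)
  hence "(\<Union>i<length Ns. fst (Ns ! i)) = S - fst N" using union' by blast
  moreover have "\<forall>i<length Ns. fst (Ns ! i) \<noteq> {}" using nonempty by auto
  moreover have "\<forall>i<length Ns. \<forall>j<length Ns. i \<noteq> j \<longrightarrow> fst (Ns ! i) \<inter> fst (Ns ! j) = {}"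
  proof (intro allI impI)
    fix i j assume "i < length Ns" "j < length Ns" "i \<noteq> j"
    thus "fst (Ns ! i) \<inter> fst (Ns ! j) = {}" using disj[rule_format, of "Suc i" "Suc j"] by simp
  qed
  ultimately show "partitions_ground Ns (S - fst N)" unfolding partitions_ground_def by blast
qed

lemma matroid_free_prod_list:
  "(\<forall>N\<in>set Ns. matroid N) \<Longrightarrow> partitions_ground Ns S \<Longrightarrow> matroid (free_prod_list Ns)"
proof (induction Ns arbitrary: S)
  case Nil
  show ?case by (simp add: matroid_empty)
next
  case (Cons N Ns)
  have part: "partitions_ground Ns (S - fst N)" using partitions_ground_ConsD[OF Cons.prems(2)] by blast
  hence "matroid (free_prod_list Ns)" using Cons.IH Cons.prems(1) by simp
  moreover have "fst N \<inter> fst (free_prod_list Ns) = {}"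
    using partitions_ground_fst_free_prod_list[OF part] by auto
  ultimately have "free_prod_pair N (free_prod_list Ns)"
    using Cons.prems(1) by (simp add: free_prod_pair_def free_prod_pair_axioms_def is_matroid_def)
  thus ?case using Cons.prems(1) by (simp add: free_prod_pair.matroid_free_prod free_prod_list_Cons)
qed

definition splitting_flag :: "'a matroid \<Rightarrow> (nat \<Rightarrow> 'a set) \<Rightarrow> nat \<Rightarrow> bool" where
  "splitting_flag M c k \<longleftrightarrow> c 0 = {} \<and> c k = fst M \<and> (\<forall>i<k. c i \<subset> c (Suc i))
     \<and> (\<forall>i\<le>k. cyclic_comparable M (c i))"

definition flag_factors :: "'a matroid \<Rightarrow> (nat \<Rightarrow> 'a set) \<Rightarrow> nat \<Rightarrow> 'a matroid list" where
  "flag_factors M c k = map (\<lambda>i. minor M (c i) (c (Suc i))) [0..<k]"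

lemma splitting_flag_strict_mono:
  assumes "splitting_flag M c k" shows "strict_mono_on {..k} c"
proof (rule strict_mono_onI)
  fix i j assume "i \<in> {..k}" "j \<in> {..k}" "i < j"
  moreover have "c n < c (Suc n)" if "n \<in> {..<k}" for n
    using assms that unfolding splitting_flag_def by simp
  ultimately show "c i < c j"
    using lift_Suc_mono_less_ivl[where N = "{..<k}" and f = c and n = i and n' = j] by force
qed

lemma splitting_flag_subset_iff:
  "splitting_flag M c k \<Longrightarrow> i \<le> k \<Longrightarrow> j \<le> k \<Longrightarrow> c i \<subseteq> c j \<longleftrightarrow> i \<le> j"
  using strict_mono_on_less_eq[OF splitting_flag_strict_mono] by simp

lemma splitting_flag_psubset_iff:
  "splitting_flag M c k \<Longrightarrow> i \<le> k \<Longrightarrow> j \<le> k \<Longrightarrow> c i \<subset> c j \<longleftrightarrow> i < j"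
  using strict_mono_on_less[OF splitting_flag_strict_mono] by simp

lemma splitting_flag_subset_ground: "splitting_flag M c k \<Longrightarrow> i \<le> k \<Longrightarrow> c i \<subseteq> fst M"
  unfolding splitting_flag_def cyclic_comparable_def by auto

context is_matroid
begin

lemma free_prod_list_flag_segment:
  assumes flag: "splitting_flag M c k" and "i < j" "j \<le> k"
  shows "free_prod_list (map (\<lambda>l. minor M (c l) (c (Suc l))) [i..<j]) = minor M (c i) (c j)"
  using assms(2)
proof (induction "j - i" arbitrary: i)
  case 0
  thus ?case by simp
next
  case (Suc d)
  show ?case
  proof (cases "Suc i = j")
    case True
    thus ?thesis by (simp add: True[symmetric])
  next
    case False
    hence "Suc i < j" using Suc.prems by simp
    have "c i \<subseteq> c (Suc i)" "c (Suc i) \<subseteq> c j" "c j \<subseteq> S"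
      using splitting_flag_subset_iff[OF flag] splitting_flag_subset_ground[OF flag] \<open>Suc i < j\<close> assms(3)
      by auto
    moreover have "free_split M (c (Suc i))"
      using flag \<open>Suc i < j\<close> assms(3) \<open>c (Suc i) \<subseteq> c j\<close> \<open>c j \<subseteq> S\<close>
      by (intro free_split_if_cyclic_comparable) (auto simp: splitting_flag_def)
    ultimately have "minor M (c i) (c j) = free_prod (minor M (c i) (c (Suc i))) (minor M (c (Suc i)) (c j))"
      by (rule minor_eq_free_prod)
    moreover have "matroid (minor M (c i) (c (Suc i)))" using \<open>c (Suc i) \<subseteq> c j\<close> \<open>c j \<subseteq> S\<close>
      by (intro matroid_minor) auto
    moreover have "[i..<j] = i # [Suc i..<j]" using Suc.prems by (simp add: upt_conv_Cons)
    moreover have "free_prod_list (map (\<lambda>l. minor M (c l) (c (Suc l))) [Suc i..<j]) = minor M (c (Suc i)) (c j)"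
      using Suc.hyps(1)[of "Suc i"] Suc.hyps(2) \<open>Suc i < j\<close> by simp
    ultimately show ?thesis using \<open>Suc i < j\<close> by (simp add: free_prod_list_Cons)
  qed
qed

lemma partitions_ground_flag_factors:
  assumes flag: "splitting_flag M c k"
  shows "partitions_ground (flag_factors M c k) S"
proof -
  have nth: "fst (flag_factors M c k ! i) = c (Suc i) - c i" if "i < k" for i
    using that unfolding flag_factors_def by simp
  have mono: "c i \<subseteq> c j \<longleftrightarrow> i \<le> j" if "i \<le> k" "j \<le> k" for i j
    using splitting_flag_subset_iff[OF flag that] .
  have "(\<Union>i<n. fst (flag_factors M c k ! i)) = c n" if "n \<le> k" for n
    using that
  proof (induction n)
    case 0
    thus ?case using flag unfolding splitting_flag_def by simp
  next
    case (Suc n)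
    have "(\<Union>i<Suc n. fst (flag_factors M c k ! i)) = c n \<union> (c (Suc n) - c n)"
      using Suc nth[of n] by (simp add: lessThan_Suc Un_commute)
    also have "\<dots> = c (Suc n)" using mono[of n "Suc n"] Suc.prems by auto
    finally show ?case .
  qed
  moreover have "c k = S" using flag unfolding splitting_flag_def by simp
  moreover have "fst (flag_factors M c k ! i) \<noteq> {}" if "i < k" for i
    using nth[OF that] mono[of "Suc i" i] that by auto
  moreover have "fst (flag_factors M c k ! i) \<inter> fst (flag_factors M c k ! j) = {}"
    if "i < k" "j < k" "i \<noteq> j" for i j
  proof (cases "i < j")
    case True
    thus ?thesis using nth that mono[of "Suc i" j] by auto
  next
    case False
    thus ?thesis using nth that mono[of "Suc j" i] by auto
  qed
  ultimately show ?thesis unfolding partitions_ground_def flag_factors_def by auto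
qed

lemma factorization_flag_factors:
  assumes flag: "splitting_flag M c k"
  shows "factorization (flag_factors M c k) M"
proof -
  have "matroid N" if N: "N \<in> set (flag_factors M c k)" for N
  proof -
    obtain i where "i < k" "N = minor M (c i) (c (Suc i))"
      using N unfolding flag_factors_def by auto
    thus "matroid N" using splitting_flag_subset_ground[OF flag, of "Suc i"] matroid_minor by simp
  qed
  moreover have "M = free_prod_list (flag_factors M c k)"
  proof (cases "k = 0")
    case True
    hence "S = {}" using flag unfolding splitting_flag_def by metis
    hence "Ind = {{}}" using empty_indep indep_subset_ground by auto
    thus ?thesis using True \<open>S = {}\<close> by (simp add: flag_factors_def prod_eq_iff)
  next
    case False
    hence "free_prod_list (flag_factors M c k) = minor M (c 0) (c k)"
      unfolding flag_factors_def using flag by (intro free_prod_list_flag_segment) auto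
    thus ?thesis using flag minor_empty_ground unfolding splitting_flag_def by simp
  qed
  ultimately show ?thesis
    unfolding factorization_def using partitions_ground_flag_factors[OF flag] by blast
qed

end

definition extend_flag :: "'a set \<Rightarrow> (nat \<Rightarrow> 'a set) \<Rightarrow> nat \<Rightarrow> 'a set" where
  "extend_flag X c i = (case i of 0 \<Rightarrow> {} | Suc j \<Rightarrow> X \<union> c j)"

lemma cyclic_comparable_empty: "cyclic_comparable M {}"
  unfolding cyclic_comparable_def by auto

lemma cyclic_comparable_ground: "cyclic_comparable M (fst M)"
  unfolding cyclic_comparable_def cyclic_flat_def flat_def by auto

context is_matroid
begin

lemma factorization_ConsD:
  assumes fac: "factorization (N # Ns) M"
  shows "N = minor M {} (fst N)" "cyclic_comparable M (fst N)"
    "factorization Ns (minor M (fst N) S)"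
proof -
  have mN: "matroid N" and mNs: "\<forall>N'\<in>set Ns. matroid N'"
    and part: "partitions_ground (N # Ns) S" and M_eq: "M = free_prod_list (N # Ns)"
    using fac unfolding factorization_def by auto
  have NS: "fst N \<subseteq> S" and part_Ns: "partitions_ground Ns (S - fst N)"
    using partitions_ground_ConsD[OF part] by auto
  let ?R = "free_prod_list Ns"
  have fst_R: "fst ?R = S - fst N" by (rule partitions_ground_fst_free_prod_list[OF part_Ns])
  interpret pair: free_prod_pair N ?R
    using mN matroid_free_prod_list[OF mNs part_Ns] fst_R
    by (simp add: free_prod_pair_def free_prod_pair_axioms_def is_matroid_def)
  have M_prod: "M = free_prod N ?R" using M_eq mN by (simp add: free_prod_list_Cons)
  show "N = minor M {} (fst N)" using pair.restrict_free_prod M_prod by simp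
  show "cyclic_comparable M (fst N)"
    using pair.free_split_free_prod M_prod NS free_split_iff_cyclic_comparable by simp
  have "minor M (fst N) S = ?R" using pair.contract_free_prod M_prod by simp
  thus "factorization Ns (minor M (fst N) S)"
    using mNs part_Ns fst_R unfolding factorization_def by simp
qed

lemma splitting_flag_extend_flag:
  assumes X: "cyclic_comparable M X" "X \<noteq> {}" and flag: "splitting_flag (minor M X S) c n"
  shows "splitting_flag M (extend_flag X c) (Suc n)"
  unfolding splitting_flag_def
proof (intro conjI allI impI)
  have XS: "X \<subseteq> S" using X(1) unfolding cyclic_comparable_def by simp
  have c_sub: "c i \<subseteq> S - X" if "i \<le> n" for i
    using splitting_flag_subset_ground[OF flag that] by simp
  have c0: "c 0 = {}" and cn: "c n = S - X" and c_step: "\<forall>i<n. c i \<subset> c (Suc i)"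
    and c_comp: "\<forall>i\<le>n. cyclic_comparable (minor M X S) (c i)"
    using flag unfolding splitting_flag_def by auto
  show "extend_flag X c 0 = {}" "extend_flag X c (Suc n) = S"
    using cn XS by (auto simp: extend_flag_def)
  fix i
  show "extend_flag X c i \<subset> extend_flag X c (Suc i)" if i: "i < Suc n"
  proof (cases i)
    case 0
    thus ?thesis using c0 X(2) by (auto simp: extend_flag_def)
  next
    case (Suc j)
    hence "c j \<subset> c (Suc j)" "c (Suc j) \<inter> X = {}" using i c_step c_sub[of "Suc j"] by auto
    thus ?thesis using Suc by (auto simp: extend_flag_def)
  qed
  show "cyclic_comparable M (extend_flag X c i)" if i: "i \<le> Suc n"
  proof (cases i)
    case 0
    thus ?thesis by (simp add: extend_flag_def cyclic_comparable_empty)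
  next
    case (Suc j)
    hence "cyclic_comparable M (X \<union> c j)"
      using X(1) XS c_comp c_sub[of j] i cyclic_comparable_ground[of M]
      by (intro cyclic_comparable_lift[of X S]) auto
    thus ?thesis using Suc by (simp add: extend_flag_def)
  qed
qed

lemma flag_factors_extend_flag:
  assumes flag: "splitting_flag (minor M X S) c n"
  shows "flag_factors M (extend_flag X c) (Suc n) = minor M {} X # flag_factors (minor M X S) c n"
proof -
  have c_sub: "c i \<subseteq> S - X" if "i \<le> n" for i
    using splitting_flag_subset_ground[OF flag that] by simp
  have c0: "c 0 = {}" and c_step: "\<forall>i<n. c i \<subset> c (Suc i)"
    using flag unfolding splitting_flag_def by auto
  have "minor M (X \<union> c i) (X \<union> c (Suc i)) = minor (minor M X S) (c i) (c (Suc i))" if "i < n" for i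
    using minor_minor[of S "c i" "c (Suc i)" X] c_step c_sub[of "Suc i"] that by auto
  hence "map (\<lambda>i. minor M (extend_flag X c (Suc i)) (extend_flag X c (Suc (Suc i)))) [0..<n]
      = flag_factors (minor M X S) c n"
    unfolding flag_factors_def extend_flag_def by simp
  moreover have "[0..<Suc n] = 0 # map Suc [0..<n]" by (simp add: map_Suc_upt upt_conv_Cons)
  ultimately show ?thesis
    unfolding flag_factors_def using c0 by (simp add: extend_flag_def)
qed

end

lemma factorization_splitting_flag:
  "matroid M \<Longrightarrow> factorization Ms M
    \<Longrightarrow> \<exists>c. splitting_flag M c (length Ms) \<and> Ms = flag_factors M c (length Ms)"
proof (induction Ms arbitrary: M)
  case Nil
  hence "fst M = {}" unfolding factorization_def partitions_ground_def by simp
  hence "splitting_flag M (\<lambda>_. {}) 0" unfolding splitting_flag_def by (simp add: cyclic_comparable_empty)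
  thus ?case by (auto simp: flag_factors_def)
next
  case (Cons N Ns)
  interpret is_matroid M using Cons.prems(1) by (simp add: is_matroid_def)
  have N: "N = minor M {} (fst N)" and X: "cyclic_comparable M (fst N)"
    and fac: "factorization Ns (minor M (fst N) S)"
    using factorization_ConsD[OF Cons.prems(2)] by auto
  have "fst N \<noteq> {}"
    using Cons.prems(2) partitions_ground_ConsD unfolding factorization_def by blast
  moreover obtain c where c: "splitting_flag (minor M (fst N) S) c (length Ns)"
    "Ns = flag_factors (minor M (fst N) S) c (length Ns)"
    using Cons.IH[OF matroid_minor fac] by auto
  ultimately show ?case
    using splitting_flag_extend_flag[OF X] flag_factors_extend_flag N by (metis length_Cons)
qed

section \<open>Pinchpoints and the primary flag\<close>

lemma cyclic_flat_subset_ground: "cyclic_flat M F \<Longrightarrow> F \<subseteq> fst M"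
  unfolding cyclic_flat_def flat_def by auto

lemma Dlat_least: "complete_sublattice (fst M) L \<Longrightarrow> {F. cyclic_flat M F} \<subseteq> L \<Longrightarrow> Dlat M \<subseteq> L"
  unfolding Dlat_def by auto

lemma Dlat_subset_ground: "D \<in> Dlat M \<Longrightarrow> D \<subseteq> fst M"
  using Dlat_least[of M "Pow (fst M)"] cyclic_flat_subset_ground[of M]
  unfolding complete_sublattice_def by blast

lemma cyclic_flat_in_Dlat: "cyclic_flat M F \<Longrightarrow> F \<in> Dlat M"
  unfolding Dlat_def by auto

lemma Union_in_Dlat:
  assumes "\<F> \<subseteq> Dlat M" shows "\<Union>\<F> \<in> Dlat M"
  unfolding Dlat_def
proof (rule InterI)
  fix L assume L: "L \<in> {L. complete_sublattice (fst M) L \<and> {F. cyclic_flat M F} \<subseteq> L}"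
  hence "\<F> \<subseteq> L" using assms unfolding Dlat_def by blast
  thus "\<Union>\<F> \<in> L" using L unfolding complete_sublattice_def by blast
qed

lemma Inter_in_Dlat:
  assumes "\<F> \<subseteq> Dlat M" shows "fst M \<inter> \<Inter>\<F> \<in> Dlat M"
  unfolding Dlat_def
proof (rule InterI)
  fix L assume L: "L \<in> {L. complete_sublattice (fst M) L \<and> {F. cyclic_flat M F} \<subseteq> L}"
  hence "\<F> \<subseteq> L" using assms unfolding Dlat_def by blast
  thus "fst M \<inter> \<Inter>\<F> \<in> L" using L unfolding complete_sublattice_def by blast
qed

lemma Dlat_avoids_interval:
  assumes YZ: "Y \<subseteq> Z" and ZS: "Z \<subseteq> fst M"
    and cf: "\<And>F. cyclic_flat M F \<Longrightarrow> F \<subseteq> Y \<or> Z \<subseteq> F" and D: "D \<in> Dlat M"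
  shows "D \<subseteq> Y \<or> Z \<subseteq> D"
proof -
  let ?L = "{D. D \<subseteq> fst M \<and> (D \<subseteq> Y \<or> Z \<subseteq> D)}"
  have "complete_sublattice (fst M) ?L" unfolding complete_sublattice_def
  proof (intro conjI allI impI)
    show "?L \<subseteq> Pow (fst M)" by auto
    fix \<F> assume \<F>: "\<F> \<subseteq> ?L"
    show "\<Union>\<F> \<in> ?L"
      using \<F> by (cases "\<exists>D\<in>\<F>. Z \<subseteq> D") auto
    show "fst M \<inter> \<Inter>\<F> \<in> ?L"
      using \<F> ZS by (cases "\<exists>D\<in>\<F>. D \<subseteq> Y") auto
  qed
  moreover have "{F. cyclic_flat M F} \<subseteq> ?L" using cf cyclic_flat_subset_ground[of M] by auto
  ultimately show ?thesis using Dlat_least D by blast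
qed

lemma cyclic_comparable_iff_Dlat:
  "X \<subseteq> fst M \<Longrightarrow> cyclic_comparable M X \<longleftrightarrow> (\<forall>D\<in>Dlat M. D \<subseteq> X \<or> X \<subseteq> D)"
  unfolding cyclic_comparable_def using Dlat_avoids_interval[of X X M] cyclic_flat_in_Dlat by blast

lemma pinchpoint_iff: "pinchpoint M T \<longleftrightarrow> T \<in> Dlat M \<and> cyclic_comparable M T"
proof (cases "T \<in> Dlat M")
  case True
  hence "cyclic_comparable M T \<longleftrightarrow> (\<forall>D\<in>Dlat M. D \<subseteq> T \<or> T \<subseteq> D)"
    by (intro cyclic_comparable_iff_Dlat Dlat_subset_ground)
  thus ?thesis unfolding pinchpoint_def by blast
qed (simp add: pinchpoint_def)

lemma pinchpoint_below:
  assumes "cyclic_comparable M X"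
  shows "pinchpoint M (\<Union>{D \<in> Dlat M. D \<subseteq> X})"
  unfolding pinchpoint_def
proof (intro conjI ballI)
  show "\<Union>{D \<in> Dlat M. D \<subseteq> X} \<in> Dlat M" by (rule Union_in_Dlat) auto
  fix U assume "U \<in> Dlat M"
  moreover have "X \<subseteq> fst M" using assms unfolding cyclic_comparable_def by simp
  ultimately have "U \<subseteq> X \<or> X \<subseteq> U" using assms cyclic_comparable_iff_Dlat by blast
  thus "\<Union>{D \<in> Dlat M. D \<subseteq> X} \<subseteq> U \<or> U \<subseteq> \<Union>{D \<in> Dlat M. D \<subseteq> X}"
    using \<open>U \<in> Dlat M\<close> by blast
qed

lemma pinchpoint_above:
  assumes "cyclic_comparable M X"
  shows "pinchpoint M (fst M \<inter> \<Inter>{D \<in> Dlat M. X \<subseteq> D})"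
  unfolding pinchpoint_def
proof (intro conjI ballI)
  show "fst M \<inter> \<Inter>{D \<in> Dlat M. X \<subseteq> D} \<in> Dlat M" by (rule Inter_in_Dlat) auto
  fix U assume "U \<in> Dlat M"
  moreover have "X \<subseteq> fst M" using assms unfolding cyclic_comparable_def by simp
  ultimately have "U \<subseteq> X \<or> X \<subseteq> U" using assms cyclic_comparable_iff_Dlat by blast
  thus "fst M \<inter> \<Inter>{D \<in> Dlat M. X \<subseteq> D} \<subseteq> U \<or> U \<subseteq> fst M \<inter> \<Inter>{D \<in> Dlat M. X \<subseteq> D}"
    using \<open>U \<in> Dlat M\<close> \<open>X \<subseteq> fst M\<close> by blast
qed

context is_matroid
begin

lemma uniform_minor_iff:
  assumes YZ: "Y \<subseteq> Z" and ZS: "Z \<subseteq> S" and Y: "cyclic_comparable M Y" and Z: "cyclic_comparable M Z"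
  shows "uniform (minor M Y Z) \<longleftrightarrow> (\<forall>D\<in>Dlat M. D \<subseteq> Y \<or> Z \<subseteq> D)"
proof
  assume uniform: "uniform (minor M Y Z)"
  have "F \<subseteq> Y \<or> Z \<subseteq> F" if F: "cyclic_flat M F" for F
  proof (cases "F \<subseteq> Y \<or> Z \<subseteq> F")
    case False
    hence "Y \<subseteq> F" "F \<subseteq> Z" using Y Z F unfolding cyclic_comparable_def by blast+
    thus ?thesis using cyclic_flat_minor_uniform[OF YZ ZS uniform F] by auto
  qed
  thus "\<forall>D\<in>Dlat M. D \<subseteq> Y \<or> Z \<subseteq> D" using Dlat_avoids_interval[OF YZ ZS] by blast
next
  assume avoid: "\<forall>D\<in>Dlat M. D \<subseteq> Y \<or> Z \<subseteq> D"
  have "cyclic_comparable M W" if "Y \<subseteq> W" "W \<subseteq> Z" for W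
    using that avoid cyclic_flat_in_Dlat ZS unfolding cyclic_comparable_def by blast
  thus "uniform (minor M Y Z)" using YZ ZS by (intro uniform_minor_if_comparable) auto
qed

lemma reducible_minor_if_comparable_between:
  assumes W: "Y \<subset> W" "W \<subset> Z" "cyclic_comparable M W" and ZS: "Z \<subseteq> S"
  shows "\<not> irreducible (minor M Y Z)"
proof
  assume irr: "irreducible (minor M Y Z)"
  let ?N = "minor M Y Z"
  interpret N: is_matroid ?N using ZS by (rule is_matroid_minor)
  define c where "c i = (if i = 0 then {} else if i = 1 then W - Y else Z - Y)" for i :: nat
  have "cyclic_comparable ?N (W - Y)" using W ZS by (intro cyclic_comparable_minor) auto
  hence "splitting_flag ?N c 2"
    using W unfolding splitting_flag_def c_def
    by (auto simp: cyclic_comparable_empty cyclic_comparable_ground[of ?N, simplified] less_2_cases_iff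
        le_Suc_eq numeral_2_eq_2)
  hence "?N \<in> set (flag_factors ?N c 2)"
    using irr N.factorization_flag_factors unfolding irreducible_def by blast
  moreover have "flag_factors ?N c 2 = [minor ?N {} (W - Y), minor ?N (W - Y) (Z - Y)]"
    unfolding flag_factors_def c_def by (simp add: upt_rec)
  ultimately have "?N = minor ?N {} (W - Y) \<or> ?N = minor ?N (W - Y) (Z - Y)" by simp
  hence "Z - Y = W - Y \<or> Z - Y = (Z - Y) - (W - Y)" by (metis fst_minor Diff_empty)
  thus False using W by blast
qed

lemma irreducible_minor_if_no_comparable_between:
  assumes YZ: "Y \<subset> Z" and ZS: "Z \<subseteq> S" and Y: "cyclic_comparable M Y" and Z: "cyclic_comparable M Z"
    and none: "\<nexists>W. Y \<subset> W \<and> W \<subset> Z \<and> cyclic_comparable M W"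
  shows "irreducible (minor M Y Z)"
  unfolding irreducible_def
proof (intro conjI allI impI)
  let ?N = "minor M Y Z"
  interpret N: is_matroid ?N using ZS by (rule is_matroid_minor)
  show "fst ?N \<noteq> {}" using YZ by auto
  fix Ms assume fac: "factorization Ms ?N"
  then obtain d where d: "splitting_flag ?N d (length Ms)" "Ms = flag_factors ?N d (length Ms)"
    using factorization_splitting_flag N.matroid by blast
  consider "length Ms = 0" | "length Ms = 1" | "2 \<le> length Ms" by linarith
  thus "?N \<in> set Ms"
  proof cases
    case 1
    thus ?thesis using d(1) YZ unfolding splitting_flag_def by auto
  next
    case 2
    hence "Ms = [minor ?N (d 0) (d 1)]" using d(2) by (simp add: flag_factors_def)
    thus ?thesis using d(1) 2 N.minor_empty_ground unfolding splitting_flag_def by auto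
  next
    case 3
    \<comment> \<open>The first step of the flag lifts to a comparable set strictly between \<open>Y\<close> and \<open>Z\<close>.\<close>
    have "d 0 \<subset> d 1" "d 1 \<subset> d (length Ms)"
      using splitting_flag_psubset_iff[OF d(1)] 3 by auto
    hence "{} \<subset> d 1" "d 1 \<subset> Z - Y" using d(1) unfolding splitting_flag_def by auto
    moreover have "cyclic_comparable ?N (d 1)" using d(1) 3 unfolding splitting_flag_def by auto
    hence "cyclic_comparable M (Y \<union> d 1)"
      using YZ ZS Y Z \<open>d 1 \<subset> Z - Y\<close> by (intro cyclic_comparable_lift) auto
    ultimately show ?thesis using none YZ by blast
  qed
qed

lemma irreducible_minor_iff:
  assumes "Y \<subset> Z" "Z \<subseteq> S" "cyclic_comparable M Y" "cyclic_comparable M Z"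
  shows "irreducible (minor M Y Z) \<longleftrightarrow> (\<nexists>W. Y \<subset> W \<and> W \<subset> Z \<and> cyclic_comparable M W)"
  using reducible_minor_if_comparable_between[OF _ _ _ assms(2)]
    irreducible_minor_if_no_comparable_between[OF assms] by blast

end

lemma sorted_wrt_set_unique:
  assumes "asymp R" "sorted_wrt R xs" "sorted_wrt R ys" "set xs = set ys"
  shows "xs = ys"
  using assms(2-4)
proof (induction xs arbitrary: ys)
  case Nil
  thus ?case by simp
next
  case (Cons x xs)
  then obtain y ys' where ys: "ys = y # ys'" by (cases ys) auto
  have "x = y"
  proof (rule ccontr)
    assume "x \<noteq> y"
    hence "x \<in> set ys'" "y \<in> set xs" using Cons.prems(3) ys by auto
    hence "R y x" "R x y" using Cons.prems(1,2) ys by auto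
    thus False using assms(1) by (meson asympD)
  qed
  moreover have "x \<notin> set xs" "y \<notin> set ys'"
    using Cons.prems(1,2) ys assms(1) by (auto dest: asympD)
  ultimately have "set xs = set ys'" using Cons.prems(3) ys by auto
  thus ?case using Cons.IH Cons.prems ys \<open>x = y\<close> by simp
qed

lemma flag_factors_eq_primary_factors:
  "flag_factors M c k = primary_factors M (map c [0..<Suc k])"
proof -
  have "[1..<Suc k] = map Suc [0..<k]" by (simp add: map_Suc_upt)
  thus ?thesis unfolding flag_factors_def primary_factors_def
    by (simp del: upt_Suc add: nth_map)
qed

lemma primary_flag_iff_splitting_flag:
  assumes "splitting_flag M c k"
  shows "primary_flag M (map c [0..<Suc k]) \<longleftrightarrow> c ` {..k} = {T. pinchpoint M T}"
proof -
  have "sorted_wrt (\<subset>) (map c [0..<Suc k])"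
    unfolding sorted_wrt_iff_nth_less using splitting_flag_psubset_iff[OF assms] by (simp del: upt_Suc)
  moreover have "set (map c [0..<Suc k]) = c ` {..k}" by (auto simp del: upt_Suc)
  ultimately show ?thesis unfolding primary_flag_def by simp
qed

lemma primary_flag_unique: "primary_flag M Ts \<Longrightarrow> primary_flag M Ts' \<Longrightarrow> Ts = Ts'"
  unfolding primary_flag_def using sorted_wrt_set_unique[of "(\<subset>)"] by (auto intro: asympI)

lemma pinchpoint_empty: "pinchpoint M {}"
  unfolding pinchpoint_iff using Union_in_Dlat[of "{}" M] cyclic_comparable_empty[of M] by auto

lemma pinchpoint_ground: "pinchpoint M (fst M)"
  unfolding pinchpoint_iff using Inter_in_Dlat[of "{}" M] cyclic_comparable_ground[of M] by auto

lemma splitting_flag_primary_flag: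
  assumes flag: "primary_flag M Ts"
  defines "k \<equiv> length Ts - 1"
  shows "splitting_flag M ((!) Ts) k" "map ((!) Ts) [0..<Suc k] = Ts"
proof -
  have sorted: "sorted_wrt (\<subset>) Ts" and pinch: "set Ts = {T. pinchpoint M T}"
    using flag unfolding primary_flag_def by auto
  have "{} \<in> set Ts" using pinch pinchpoint_empty[of M] by simp
  hence len: "length Ts = Suc k" unfolding k_def by (cases Ts) auto
  have in_Ts: "T \<in> set Ts \<longleftrightarrow> (\<exists>l\<le>k. Ts ! l = T)" for T
    unfolding in_set_conv_nth len less_Suc_eq_le ..
  show "map ((!) Ts) [0..<Suc k] = Ts" using map_nth[of Ts] unfolding len .
  have less: "Ts ! i \<subset> Ts ! j" if "i < j" "j \<le> k" for i j
    using sorted that len by (simp add: sorted_wrt_iff_nth_less)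
  have pinch_l: "pinchpoint M (Ts ! l)" if "l \<le> k" for l
    using pinch in_Ts that by blast
  obtain i where i: "i \<le> k" "Ts ! i = {}"
    using \<open>{} \<in> set Ts\<close> in_Ts by blast
  obtain j where j: "j \<le> k" "Ts ! j = fst M"
    using pinch pinchpoint_ground[of M] in_Ts by blast
  have "Ts ! l \<subseteq> fst M" if "l \<le> k" for l
    using pinch_l[OF that] Dlat_subset_ground unfolding pinchpoint_def by blast
  hence "Ts ! k = fst M" using j less[of j k] by (cases "j = k") auto
  moreover have "Ts ! 0 = {}" using i less[of 0 i] by (cases "i = 0") auto
  moreover have "cyclic_comparable M (Ts ! l)" if "l \<le> k" for l
    using pinch_l[OF that] pinchpoint_iff by blast
  ultimately show "splitting_flag M ((!) Ts) k"
    unfolding splitting_flag_def using less by auto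
qed

context is_matroid
begin

lemma splitting_flag_comparable_Dlat:
  "splitting_flag M c k \<Longrightarrow> i \<le> k \<Longrightarrow> D \<in> Dlat M \<Longrightarrow> D \<subseteq> c i \<or> c i \<subseteq> D"
proof -
  assume flag: "splitting_flag M c k" and i: "i \<le> k" and D: "D \<in> Dlat M"
  have "cyclic_comparable M (c i)" using flag i unfolding splitting_flag_def by blast
  thus ?thesis using cyclic_comparable_iff_Dlat splitting_flag_subset_ground[OF flag i] D by blast
qed

lemma pinchpoint_in_flag:
  assumes flag: "splitting_flag M c k"
    and factors: "\<forall>i<k. irreducible (minor M (c i) (c (Suc i))) \<or> uniform (minor M (c i) (c (Suc i)))"
    and T: "pinchpoint M T"
  shows "\<exists>i\<le>k. T = c i"
proof -
  have TD: "T \<in> Dlat M" and T_comp: "cyclic_comparable M T" using T pinchpoint_iff[of M T] by auto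
  have comp: "\<forall>i\<le>k. cyclic_comparable M (c i)" and c0: "c 0 = {}" and ck: "c k = S"
    using flag unfolding splitting_flag_def by auto
  show ?thesis
  proof (cases "\<forall>i<k. c i \<subseteq> T \<longrightarrow> c (Suc i) \<subseteq> T")
    case True
    have "c i \<subseteq> T" if "i \<le> k" for i
      using that by (induction i) (use c0 True in auto)
    hence "T = c k" using ck Dlat_subset_ground[OF TD] by auto
    thus ?thesis by auto
  next
    case False
    then obtain i where i: "i < k" "c i \<subseteq> T" "\<not> c (Suc i) \<subseteq> T" by blast
    have "T \<subseteq> c (Suc i)" using splitting_flag_comparable_Dlat[OF flag _ TD, of "Suc i"] i by auto
    show ?thesis
    proof (rule ccontr)
      assume "\<not> ?thesis"
      hence "T \<noteq> c i" using i(1) by auto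
      hence between: "c i \<subset> T" "T \<subset> c (Suc i)" using i \<open>T \<subseteq> c (Suc i)\<close> by auto
      have facts: "c i \<subset> c (Suc i)" "c (Suc i) \<subseteq> S" "cyclic_comparable M (c i)" "cyclic_comparable M (c (Suc i))"
        using flag i(1) comp splitting_flag_subset_ground[OF flag, of "Suc i"] unfolding splitting_flag_def
        by auto
      hence "\<not> irreducible (minor M (c i) (c (Suc i)))"
        using irreducible_minor_iff between T_comp by blast
      hence "uniform (minor M (c i) (c (Suc i)))" using factors i by blast
      hence "T \<subseteq> c i \<or> c (Suc i) \<subseteq> T" using uniform_minor_iff facts TD by blast
      thus False using between by auto
    qed
  qed
qed

lemma flag_pinchpoint:
  assumes flag: "splitting_flag M c k"
    and factors: "\<forall>i<k. irreducible (minor M (c i) (c (Suc i))) \<or> uniform (minor M (c i) (c (Suc i)))"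
    and segments: "\<forall>a b. Suc a < b \<and> b \<le> k \<longrightarrow> \<not> uniform (minor M (c a) (c b))"
    and i: "i \<le> k"
  shows "pinchpoint M (c i)"
proof -
  have comp: "cyclic_comparable M (c i)" using flag i unfolding splitting_flag_def by auto
  define lo where "lo = \<Union>{D \<in> Dlat M. D \<subseteq> c i}"
  define hi where "hi = S \<inter> \<Inter>{D \<in> Dlat M. c i \<subseteq> D}"
  have "pinchpoint M lo" unfolding lo_def by (rule pinchpoint_below[OF comp])
  then obtain a where a: "a \<le> k" "lo = c a" using pinchpoint_in_flag[OF flag factors] by blast
  have "pinchpoint M hi" unfolding hi_def by (rule pinchpoint_above[OF comp])
  then obtain b where b: "b \<le> k" "hi = c b" using pinchpoint_in_flag[OF flag factors] by blast
  show ?thesis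
  proof (rule ccontr)
    assume "\<not> pinchpoint M (c i)"
    hence "c i \<notin> Dlat M" using comp pinchpoint_iff[of M "c i"] by blast
    moreover have "lo \<in> Dlat M" "hi \<in> Dlat M" "lo \<subseteq> c i" "c i \<subseteq> hi"
      unfolding lo_def hi_def using Union_in_Dlat[of _ M] Inter_in_Dlat[of _ M] splitting_flag_subset_ground[OF flag i]
      by auto
    ultimately have "c a \<subset> c i" "c i \<subset> c b" using a b by auto
    hence "a < i" "i < b" using splitting_flag_psubset_iff[OF flag] a b i by auto
    \<comment> \<open>Every element of \<open>Dlat M\<close> lies below \<open>lo\<close> or above \<open>hi\<close>, so the segment from \<open>a\<close> to \<open>b\<close> is uniform.\<close>
    have "D \<subseteq> c a \<or> c b \<subseteq> D" if "D \<in> Dlat M" for D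
      using splitting_flag_comparable_Dlat[OF flag i that] that a b unfolding lo_def hi_def by blast
    moreover have "c a \<subseteq> c b" "c b \<subseteq> S" using splitting_flag_subset_iff[OF flag] a b
        splitting_flag_subset_ground[OF flag] \<open>a < i\<close> \<open>i < b\<close> by auto
    ultimately have "uniform (minor M (c a) (c b))"
      using uniform_minor_iff flag a b unfolding splitting_flag_def by auto
    thus False using segments \<open>a < i\<close> \<open>i < b\<close> b by auto
  qed
qed

lemma flag_factor_irreducible_or_uniform:
  assumes flag: "splitting_flag M c k" and pinch: "c ` {..k} = {T. pinchpoint M T}" and i: "i < k"
  shows "irreducible (minor M (c i) (c (Suc i))) \<or> uniform (minor M (c i) (c (Suc i)))"
proof -
  have facts: "c i \<subset> c (Suc i)" "c (Suc i) \<subseteq> S" "cyclic_comparable M (c i)" "cyclic_comparable M (c (Suc i))"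
    using flag i splitting_flag_subset_ground[OF flag, of "Suc i"] unfolding splitting_flag_def by auto
  have flag_pinch: "\<exists>j\<le>k. T = c j" if "pinchpoint M T" for T
    using pinch that by auto
  show ?thesis
  proof (cases "irreducible (minor M (c i) (c (Suc i)))")
    case False
    then obtain W where W: "c i \<subset> W" "W \<subset> c (Suc i)" "cyclic_comparable M W"
      using irreducible_minor_iff[OF facts] by blast
    have "W \<subseteq> S" using W(3) unfolding cyclic_comparable_def by simp
    obtain j where j: "j \<le> k" "\<Union>{D \<in> Dlat M. D \<subseteq> W} = c j"
      using flag_pinch pinchpoint_below[OF W(3)] by blast
    obtain l where l: "l \<le> k" "S \<inter> \<Inter>{D \<in> Dlat M. W \<subseteq> D} = c l"
      using flag_pinch pinchpoint_above[OF W(3)] by blast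
    have "c j \<subseteq> W" "W \<subseteq> c l" using j(2) l(2) \<open>W \<subseteq> S\<close> by auto
    hence "c j \<subset> c (Suc i)" "c i \<subset> c l" using W by auto
    hence "j \<le> i" "Suc i \<le> l" using splitting_flag_psubset_iff[OF flag] i j l by auto
    hence "c j \<subseteq> c i" "c (Suc i) \<subseteq> c l" using splitting_flag_subset_iff[OF flag] i j l by auto
    moreover have "D \<subseteq> c j \<or> c l \<subseteq> D" if "D \<in> Dlat M" for D
    proof -
      have "D \<subseteq> W \<or> W \<subseteq> D" using W(3) \<open>W \<subseteq> S\<close> cyclic_comparable_iff_Dlat[of W M] that by blast
      thus ?thesis using that j(2) l(2) by blast
    qed
    ultimately have "\<forall>D\<in>Dlat M. D \<subseteq> c i \<or> c (Suc i) \<subseteq> D" by blast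
    thus ?thesis using uniform_minor_iff facts by auto
  qed simp
qed

lemma flag_segment_not_uniform:
  assumes flag: "splitting_flag M c k" and pinch: "pinchpoint M (c (Suc a))"
    and ab: "Suc a < b" "b \<le> k"
  shows "\<not> uniform (minor M (c a) (c b))"
proof
  assume "uniform (minor M (c a) (c b))"
  moreover have "c a \<subseteq> c b" "c b \<subseteq> S" "cyclic_comparable M (c a)" "cyclic_comparable M (c b)"
    using flag ab splitting_flag_subset_iff[OF flag] splitting_flag_subset_ground[OF flag]
    unfolding splitting_flag_def by auto
  moreover have "c (Suc a) \<in> Dlat M" using pinch pinchpoint_iff[of M "c (Suc a)"] by blast
  ultimately have "c (Suc a) \<subseteq> c a \<or> c b \<subseteq> c (Suc a)" using uniform_minor_iff by blast
  thus False using splitting_flag_subset_iff[OF flag] ab by auto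
qed

lemma free_prod_list_take_drop_flag_factors:
  assumes flag: "splitting_flag M c k" and "i < j" "j < k"
  shows "free_prod_list (take (j - i + 1) (drop i (flag_factors M c k))) = minor M (c i) (c (Suc j))"
proof -
  have "take (j - i + 1) (drop i (flag_factors M c k)) = map (\<lambda>l. minor M (c l) (c (Suc l))) [i..<Suc j]"
    using assms(2,3) unfolding flag_factors_def by (simp add: drop_map take_map take_upt del: upt_Suc)
  thus ?thesis using free_prod_list_flag_segment[OF flag, of i "Suc j"] assms(2,3) by simp
qed

end

definition canonical_factorization :: "'a matroid list \<Rightarrow> 'a matroid \<Rightarrow> bool" where
  "canonical_factorization Ms M \<longleftrightarrow> factorization Ms M
     \<and> (\<forall>N \<in> set Ms. irreducible N \<or> uniform N)
     \<and> (\<forall>i j. i < j \<and> j < length Ms \<longrightarrow> \<not> uniform (free_prod_list (take (j - i + 1) (drop i Ms))))"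

context is_matroid
begin

lemma flag_factors_segments_iff:
  assumes flag: "splitting_flag M c k"
  shows "(\<forall>i j. i < j \<and> j < length (flag_factors M c k) \<longrightarrow>
      \<not> uniform (free_prod_list (take (j - i + 1) (drop i (flag_factors M c k)))))
    \<longleftrightarrow> (\<forall>a b. Suc a < b \<and> b \<le> k \<longrightarrow> \<not> uniform (minor M (c a) (c b)))"
proof -
  have "(\<forall>i j. i < j \<and> j < k \<longrightarrow> \<not> uniform (minor M (c i) (c (Suc j))))
      \<longleftrightarrow> (\<forall>a b. Suc a < b \<and> b \<le> k \<longrightarrow> \<not> uniform (minor M (c a) (c b)))"
  proof (intro iffI allI impI)
    fix a b assume H: "\<forall>i j. i < j \<and> j < k \<longrightarrow> \<not> uniform (minor M (c i) (c (Suc j)))"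
      and ab: "Suc a < b \<and> b \<le> k"
    then obtain j where "b = Suc j" by (cases b) auto
    thus "\<not> uniform (minor M (c a) (c b))" using H ab by auto
  next
    fix i j assume "\<forall>a b. Suc a < b \<and> b \<le> k \<longrightarrow> \<not> uniform (minor M (c a) (c b))" "i < j \<and> j < k"
    thus "\<not> uniform (minor M (c i) (c (Suc j)))" by auto
  qed
  thus ?thesis using free_prod_list_take_drop_flag_factors[OF flag] by (simp add: flag_factors_def)
qed

lemma canonical_flag_factors_iff:
  assumes flag: "splitting_flag M c k"
  shows "canonical_factorization (flag_factors M c k) M \<longleftrightarrow> c ` {..k} = {T. pinchpoint M T}"
proof -
  let ?Ms = "flag_factors M c k"
  let ?factors = "\<forall>i<k. irreducible (minor M (c i) (c (Suc i))) \<or> uniform (minor M (c i) (c (Suc i)))"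
  let ?segments = "\<forall>a b. Suc a < b \<and> b \<le> k \<longrightarrow> \<not> uniform (minor M (c a) (c b))"
  have factors_iff: "(\<forall>N \<in> set ?Ms. irreducible N \<or> uniform N) \<longleftrightarrow> ?factors"
    by (auto simp: flag_factors_def)
  note segments_iff = flag_factors_segments_iff[OF flag]
  show ?thesis
  proof
    assume "canonical_factorization ?Ms M"
    hence factors: ?factors and segments: ?segments
      unfolding canonical_factorization_def factors_iff segments_iff by blast+
    show "c ` {..k} = {T. pinchpoint M T}"
      using flag_pinchpoint[OF flag factors segments] pinchpoint_in_flag[OF flag factors] by blast
  next
    assume pinch: "c ` {..k} = {T. pinchpoint M T}"
    have ?factors using flag_factor_irreducible_or_uniform[OF flag pinch] by blast
    moreover have ?segments
    proof (intro allI impI)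
      fix a b assume ab: "Suc a < b \<and> b \<le> k"
      hence "c (Suc a) \<in> c ` {..k}" by auto
      hence "pinchpoint M (c (Suc a))" using pinch by auto
      thus "\<not> uniform (minor M (c a) (c b))" using ab by (intro flag_segment_not_uniform[OF flag]) auto
    qed
    ultimately show "canonical_factorization ?Ms M"
      unfolding canonical_factorization_def factors_iff segments_iff
      using factorization_flag_factors[OF flag] by blast
  qed
qed

lemma canonical_factorization_iff_primary_factors:
  assumes primary: "primary_flag M Ts"
  shows "canonical_factorization Ms M \<longleftrightarrow> Ms = primary_factors M Ts"
proof
  assume canonical: "canonical_factorization Ms M"
  then obtain c where flag: "splitting_flag M c (length Ms)" and Ms: "Ms = flag_factors M c (length Ms)"
    using factorization_splitting_flag matroid unfolding canonical_factorization_def by blast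
  have "primary_flag M (map c [0..<Suc (length Ms)])"
    using canonical canonical_flag_factors_iff[OF flag] primary_flag_iff_splitting_flag[OF flag] Ms
    by simp
  hence "map c [0..<Suc (length Ms)] = Ts" using primary_flag_unique primary by blast
  thus "Ms = primary_factors M Ts" using Ms flag_factors_eq_primary_factors by metis
next
  assume Ms: "Ms = primary_factors M Ts"
  let ?k = "length Ts - 1"
  have flag: "splitting_flag M ((!) Ts) ?k" and Ts: "map ((!) Ts) [0..<Suc ?k] = Ts"
    using splitting_flag_primary_flag[OF primary] by auto
  have "Ms = flag_factors M ((!) Ts) ?k" using Ms Ts flag_factors_eq_primary_factors by metis
  thus "canonical_factorization Ms M"
    using canonical_flag_factors_iff[OF flag] primary_flag_iff_splitting_flag[OF flag] Ts primary
    by simp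
qed

end

theorem theorem6p16:
  fixes M :: "'a matroid" and Ts :: "'a set list"
  assumes "matroid M"
    and "primary_flag M Ts"
  shows "\<forall>Ms. (factorization Ms M
              \<and> (\<forall>N \<in> set Ms. irreducible N \<or> uniform N)
              \<and> (\<forall>i j. i < j \<and> j < length Ms \<longrightarrow>
                    \<not> uniform (free_prod_list (take (j - i + 1) (drop i Ms)))))
           \<longleftrightarrow> Ms = primary_factors M Ts"
proof -
  interpret is_matroid M using assms(1) by (simp add: is_matroid_def)
  show ?thesis
    using canonical_factorization_iff_primary_factors[OF assms(2)]
    unfolding canonical_factorization_def by blast
qed

end
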